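(* Let $K$ be a field and let $I_A\subset K[x_1,\ldots,x_n]$ be a toric ideal of height $2$. Then $\mathrm{Split}(I_A)=\mu(I_A)$ and $\mathrm{Split}_{\mathrm{rad}}(I_A)=\mathrm{bar}(I_A)$.
   Context: $A=\{{\bf a}_1,\ldots,{\bf a}_n\}\subset\mathbb{Z}^m$ with $\ker_{\mathbb{Z}}(A)\cap\mathbb{N}^n=\{{\bf 0}\}$, where $\ker_{\mathbb{Z}}(A)=\{{\bf u}\in\mathbb{Z}^n\mid\sum u_i{\bf a}_i={\bf 0}\}$; $I_A$ is the kernel of $K[x_1,\ldots,x_n]\to K[t_1^{\pm1},\ldots,t_m^{\pm1}]$, $x_i\mapsto{\bf t}^{{\bf a}_i}$, and its height equals $\dim_{\mathbb{Q}}\ker_{\mathbb{Q}}(A)$. $\mu(I_A)$ is the minimal number of generators of $I_A$. $\mathrm{bar}(I_A)$ is the smallest $t$ such that there exist binomials $B_1,\ldots,B_t\in I_A$ with $I_A=\mathrm{rad}(B_1,\ldots,B_t)$. $\mathrm{Split}(I_A)$ is the smallest integer $s$ such that there exist toric ideals $I_{A_1},\ldots,I_{A_s}\subset K[x_1,\ldots,x_n]$ with $I_A=I_{A_1}+\cdots+I_{A_s}$ and $I_{A_i}\ne I_A$ for all $i$; $\mathrm{Split}_{\mathrm{rad}}(I_A)$ is the smallest integer $r$ such that there exist toric ideals $I_{A_1},\ldots,I_{A_r}\subset K[x_1,\ldots,x_n]$ with $I_A=\mathrm{rad}(I_{A_1}+\cdots+I_{A_r})$ and $I_{A_i}\ne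 I_A$ for all $i$. *)

theory Defs
  imports Complex_Main "HOL-Library.Poly_Mapping" "HOL-Library.Function_Algebras"
begin

text \<open>K[x_1,...,x_n] is the subring of those
  polynomials only involving the variables 0,...,n-1.\<close>

type_synonym 'a mpoly = "(nat \<Rightarrow>\<^sub>0 nat) \<Rightarrow>\<^sub>0 'a"

definition polyring :: "nat \<Rightarrow> 'a::field mpoly set" where
  "polyring n = {p. \<forall>e \<in> Poly_Mapping.keys p. \<forall>i \<in> Poly_Mapping.keys e. i < n}"

text \<open>The configuration A = {a_1,...,a_n} in Z^m is given by a :: nat to nat to int,
  a i j being the j-th coordinate of the (i+1)-st vector (i < n, j < m).
  A-degree of a monomial x^e, i.e. the exponent of its image t^(sum e_i a_i).\<close>

definition Adeg :: "nat \<Rightarrow> nat \<Rightarrow> (nat \<Rightarrow> nat \<Rightarrow> int) \<Rightarrow> (nat \<Rightarrow>\<^sub>0 nat) \<Rightarrow> (nat \<Rightarrow> int)" where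
  "Adeg n m a e = (\<lambda>j. if j < m then (\<Sum>i<n. int (Poly_Mapping.lookup e i) * a i j) else 0)"

text \<open>Toric ideal I_A: kernel of K[x_1..x_n] to Laurent polynomials, x_i to t^(a_i). A polynomial
  is mapped to zero iff, for every Laurent monomial t^b, the coefficients of
  the monomials x^e with A-degree b sum to zero.\<close>

definition toric_ideal :: "nat \<Rightarrow> nat \<Rightarrow> (nat \<Rightarrow> nat \<Rightarrow> int) \<Rightarrow> 'a::field mpoly set" where
  "toric_ideal n m a = {p \<in> polyring n.
     \<forall>b::nat \<Rightarrow> int. (\<Sum>e \<in> {e \<in> Poly_Mapping.keys p. Adeg n m a e = b}. Poly_Mapping.lookup p e) = 0}"

definition is_toric_ideal :: "nat \<Rightarrow> 'a::field mpoly set \<Rightarrow> bool" where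
  "is_toric_ideal n J \<longleftrightarrow> (\<exists>m a. J = toric_ideal n m a)"

definition pointed_config :: "nat \<Rightarrow> nat \<Rightarrow> (nat \<Rightarrow> nat \<Rightarrow> int) \<Rightarrow> bool" where
  "pointed_config n m a \<longleftrightarrow> (\<forall>u::nat \<Rightarrow> nat. (\<forall>i\<ge>n. u i = 0) \<and>
      (\<forall>j<m. (\<Sum>i<n. int (u i) * a i j) = 0) \<longrightarrow> (\<forall>i. u i = 0))"

definition kerQ :: "nat \<Rightarrow> nat \<Rightarrow> (nat \<Rightarrow> nat \<Rightarrow> int) \<Rightarrow> (nat \<Rightarrow> rat) set" where
  "kerQ n m a = {u. (\<forall>i\<ge>n. u i = 0) \<and> (\<forall>j<m. (\<Sum>i<n. u i * of_int (a i j)) = 0)}"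

definition dimQ :: "(nat \<Rightarrow> rat) set \<Rightarrow> nat" where
  "dimQ S = Vector_Spaces.vector_space.dim (\<lambda>(c::rat) (v::nat \<Rightarrow> rat). (\<lambda>i. c * v i)) S"

definition ideal_gen :: "nat \<Rightarrow> 'a::field mpoly set \<Rightarrow> 'a mpoly set" where
  "ideal_gen n S = {f. \<exists>(k::nat) r g. (\<forall>i<k. r i \<in> polyring n \<and> g i \<in> S) \<and> f = (\<Sum>i<k. r i * g i)}"

definition ideal_sum :: "nat \<Rightarrow> (nat \<Rightarrow> 'a::field mpoly set) \<Rightarrow> 'a mpoly set" where
  "ideal_sum s J = {f. \<exists>g. (\<forall>i<s. g i \<in> J i) \<and> f = (\<Sum>i<s. g i)}"

definition radical :: "nat \<Rightarrow> 'a::field mpoly set \<Rightarrow> 'a mpoly set" where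
  "radical n J = {f \<in> polyring n. \<exists>k. f ^ k \<in> J}"

definition binomial :: "'a::field mpoly \<Rightarrow> bool" where
  "binomial B \<longleftrightarrow> (\<exists>u v. B = Poly_Mapping.single u 1 - Poly_Mapping.single v 1)"

definition mu :: "nat \<Rightarrow> 'a::field mpoly set \<Rightarrow> nat" where
  "mu n I = (LEAST k. \<exists>S. S \<subseteq> polyring n \<and> finite S \<and> card S = k \<and> ideal_gen n S = I)"

definition bar :: "nat \<Rightarrow> 'a::field mpoly set \<Rightarrow> nat" where
  "bar n I = (LEAST t. \<exists>B. (\<forall>i<t. binomial (B i) \<and> B i \<in> I) \<and>
                          I = radical n (ideal_gen n (B ` {..<t})))"

definition Split :: "nat \<Rightarrow> 'a::field mpoly set \<Rightarrow> nat" where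
  "Split n I = (LEAST s. \<exists>J. (\<forall>i<s. is_toric_ideal n (J i) \<and> J i \<noteq> I) \<and> I = ideal_sum s J)"

definition Split_rad :: "nat \<Rightarrow> 'a::field mpoly set \<Rightarrow> nat" where
  "Split_rad n I = (LEAST r. \<exists>J. (\<forall>i<r. is_toric_ideal n (J i) \<and> J i \<noteq> I) \<and>
                                 I = radical n (ideal_sum r J))"

end

theory Submission
  imports Defs
begin

text \<open>A toric ideal is determined by its lattice L = ker_Z(A), and this lattice is saturated.
  If L has rank two, a proper toric subideal has a saturated lattice L' of rank at most one
  inside L, so L' = Z w and the subideal is principal, generated by the binomial
  x^(w+) - x^(w-). Conversely every binomial of I_A lies in a proper toric subideal, namely
  the toric ideal of the saturation of the line through its exponent difference. Hence
  splittings of I_A into proper toric ideals, exactly or up to radical, correspond to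
  binomial families of the same size that generate I_A, exactly or up to radical. This gives
  Split_rad = bar directly, and Split = mu because, A being pointed, a graded Nakayama
  argument shows that I_A has a minimal generating set consisting of binomials.\<close>

abbreviation X :: "(nat \<Rightarrow>\<^sub>0 nat) \<Rightarrow> 'a::field mpoly" where
  "X e \<equiv> Poly_Mapping.single e 1"

abbreviation cpoly :: "'a \<Rightarrow> 'a::field mpoly" where
  "cpoly c \<equiv> Poly_Mapping.single 0 c"

definition in_vars :: "nat \<Rightarrow> (nat \<Rightarrow>\<^sub>0 nat) \<Rightarrow> bool" where
  "in_vars n e \<longleftrightarrow> Poly_Mapping.keys e \<subseteq> {..<n}"

lemma polyring_iff: "p \<in> polyring n \<longleftrightarrow> (\<forall>e\<in>Poly_Mapping.keys p. in_vars n e)"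
  by (auto simp: polyring_def in_vars_def)

lemma in_vars_add: "in_vars n e \<Longrightarrow> in_vars n f \<Longrightarrow> in_vars n (e + f)"
  using keys_add[of e f] unfolding in_vars_def by blast

lemma in_vars_lookup: "in_vars n e \<Longrightarrow> n \<le> i \<Longrightarrow> Poly_Mapping.lookup e i = 0"
  by (auto simp: in_vars_def in_keys_iff)

lemma polyring_0 [simp]: "0 \<in> polyring n"
  by (simp add: polyring_iff)

lemma polyring_1 [simp]: "1 \<in> polyring n"
  by (simp add: polyring_iff in_vars_def)

lemma polyring_add: "p \<in> polyring n \<Longrightarrow> q \<in> polyring n \<Longrightarrow> p + q \<in> polyring n"
  using keys_add[of p q] unfolding polyring_iff by blast

lemma polyring_uminus: "p \<in> polyring n \<Longrightarrow> - p \<in> polyring n"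
  by (simp add: polyring_iff)

lemma polyring_diff: "p \<in> polyring n \<Longrightarrow> q \<in> polyring n \<Longrightarrow> p - q \<in> polyring n"
  using polyring_add[OF _ polyring_uminus] by (metis diff_conv_add_uminus)

lemma polyring_sum: "(\<And>i. i \<in> A \<Longrightarrow> f i \<in> polyring n) \<Longrightarrow> sum f A \<in> polyring n"
  by (induction A rule: infinite_finite_induct) (auto intro: polyring_add)

lemma polyring_single: "in_vars n e \<Longrightarrow> Poly_Mapping.single e c \<in> polyring n"
  by (simp add: polyring_iff)

lemma polyring_cpoly: "cpoly c \<in> polyring n"
  by (simp add: polyring_single in_vars_def)

lemma polyring_mult: "p \<in> polyring n \<Longrightarrow> q \<in> polyring n \<Longrightarrow> p * q \<in> polyring n"
proof -
  assume "p \<in> polyring n" "q \<in> polyring n"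
  then have "in_vars n (e + f)" if "e \<in> Poly_Mapping.keys p" "f \<in> Poly_Mapping.keys q" for e f
    using that by (simp add: polyring_iff in_vars_add)
  then show "p * q \<in> polyring n"
    using keys_mult[of p q] unfolding polyring_iff by blast
qed

lemma polyring_power: "p \<in> polyring n \<Longrightarrow> p ^ k \<in> polyring n"
  by (induction k) (auto intro: polyring_mult)

lemma mpoly_eq_sum_single:
  "p = (\<Sum>e\<in>Poly_Mapping.keys p. Poly_Mapping.single e (Poly_Mapping.lookup p e))"
  by (rule poly_mapping_eqI)
     (auto simp: lookup_sum lookup_single when_def in_keys_iff sum.delta)

lemma single_mult_eq_sum:
  "Poly_Mapping.single c x * p =
     (\<Sum>e\<in>Poly_Mapping.keys p. Poly_Mapping.single (c + e) (x * Poly_Mapping.lookup p e))"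
  by (subst (1) mpoly_eq_sum_single[of p]) (simp add: sum_distrib_left mult_single)

definition is_ideal :: "nat \<Rightarrow> 'a::field mpoly set \<Rightarrow> bool" where
  "is_ideal n I \<longleftrightarrow>
     0 \<in> I \<and> (\<forall>f\<in>I. \<forall>g\<in>I. f + g \<in> I) \<and> (\<forall>r\<in>polyring n. \<forall>f\<in>I. r * f \<in> I)"

lemma is_idealD:
  assumes "is_ideal n I"
  shows "0 \<in> I" "f \<in> I \<Longrightarrow> g \<in> I \<Longrightarrow> f + g \<in> I"
    "r \<in> polyring n \<Longrightarrow> f \<in> I \<Longrightarrow> r * f \<in> I"
  using assms by (auto simp: is_ideal_def)

lemma is_ideal_polyring: "is_ideal n (polyring n)"
  by (simp add: is_ideal_def polyring_add polyring_mult)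

lemma sum_in_ideal:
  assumes "is_ideal n I" "\<And>i. i \<in> A \<Longrightarrow> f i \<in> I"
  shows "sum f A \<in> I"
  using assms(2) by (induction A rule: infinite_finite_induct) (auto intro: is_idealD[OF assms(1)])

lemma ideal_gen_0: "0 \<in> ideal_gen n S"
  unfolding ideal_gen_def by (rule CollectI, rule exI[of _ 0]) simp

lemma ideal_gen_cons:
  assumes "f \<in> ideal_gen n S" "r \<in> polyring n" "s \<in> S"
  shows "r * s + f \<in> ideal_gen n S"
proof -
  obtain k :: nat and r' g where rg: "\<forall>i<k. r' i \<in> polyring n \<and> g i \<in> S" "f = (\<Sum>i<k. r' i * g i)"
    using assms(1) unfolding ideal_gen_def by auto
  then have "r * s + f = (\<Sum>i<Suc k. (r'(k := r)) i * (g(k := s)) i)"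
    by (simp add: add.commute)
  moreover have "\<forall>i<Suc k. (r'(k := r)) i \<in> polyring n \<and> (g(k := s)) i \<in> S"
    using rg(1) assms by (simp add: less_Suc_eq)
  ultimately show ?thesis unfolding ideal_gen_def by blast
qed

lemma ideal_gen_induct [consumes 1, case_names zero step]:
  assumes "f \<in> ideal_gen n S"
    and "P 0"
    and "\<And>r s f. r \<in> polyring n \<Longrightarrow> s \<in> S \<Longrightarrow> f \<in> ideal_gen n S \<Longrightarrow> P f \<Longrightarrow>
      P (r * s + f)"
  shows "P f"
proof -
  obtain k :: nat and r g where rg: "\<forall>i<k. r i \<in> polyring n \<and> g i \<in> S" "f = (\<Sum>i<k. r i * g i)"
    using assms(1) unfolding ideal_gen_def by auto
  have "(\<Sum>i<j. r i * g i) \<in> ideal_gen n S \<and> P (\<Sum>i<j. r i * g i)" if "j \<le> k" for j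
    using that
  proof (induction j)
    case 0
    then show ?case by (simp add: ideal_gen_0 assms(2))
  next
    case (Suc j)
    then have "r j \<in> polyring n" "g j \<in> S" using rg(1) by auto
    with Suc show ?case by (auto simp: add.commute intro: ideal_gen_cons assms(3))
  qed
  then show ?thesis using rg(2) by blast
qed

lemma ideal_gen_base: "s \<in> S \<Longrightarrow> s \<in> ideal_gen n S"
  using ideal_gen_cons[OF ideal_gen_0, of 1 n s S] by (simp add: polyring_iff in_vars_def)

lemma is_ideal_ideal_gen: "is_ideal n (ideal_gen n S)"
  unfolding is_ideal_def
proof (intro conjI ballI)
  show "0 \<in> ideal_gen n S" by (rule ideal_gen_0)
next
  fix f g assume "f \<in> ideal_gen n S" "g \<in> ideal_gen n S"
  then show "f + g \<in> ideal_gen n S"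
    by (induction f rule: ideal_gen_induct) (auto simp: add.assoc intro: ideal_gen_cons)
next
  fix q f :: "'a mpoly" assume q: "q \<in> polyring n" and f: "f \<in> ideal_gen n S"
  from f show "q * f \<in> ideal_gen n S"
  proof (induction f rule: ideal_gen_induct)
    case zero
    then show ?case by (simp add: ideal_gen_0)
  next
    case (step r s f)
    then show ?case using q
      by (simp add: distrib_left mult.assoc[symmetric]) (rule ideal_gen_cons, auto intro: polyring_mult)
  qed
qed

lemma ideal_gen_least:
  assumes "S \<subseteq> I" "is_ideal n I"
  shows "ideal_gen n S \<subseteq> I"
proof
  fix f assume "f \<in> ideal_gen n S"
  then show "f \<in> I"
    by (induction rule: ideal_gen_induct) (use assms in \<open>auto intro: is_idealD\<close>)
qed

lemma ideal_gen_mono: "S \<subseteq> T \<Longrightarrow> ideal_gen n S \<subseteq> ideal_gen n T"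
  by (rule ideal_gen_least) (auto intro: ideal_gen_base is_ideal_ideal_gen)

lemma ideal_gen_mult: "r \<in> polyring n \<Longrightarrow> s \<in> S \<Longrightarrow> r * s \<in> ideal_gen n S"
  by (rule is_idealD(3)[OF is_ideal_ideal_gen]) (auto intro: ideal_gen_base)

lemma ideal_gen_uminus: "f \<in> ideal_gen n S \<Longrightarrow> - f \<in> ideal_gen n S"
proof -
  assume "f \<in> ideal_gen n S"
  then have "(- 1) * f \<in> ideal_gen n S"
    by (rule is_idealD(3)[OF is_ideal_ideal_gen polyring_uminus[OF polyring_1]])
  then show "- f \<in> ideal_gen n S" by simp
qed

lemma ideal_gen_diff: "f \<in> ideal_gen n S \<Longrightarrow> g \<in> ideal_gen n S \<Longrightarrow> f - g \<in> ideal_gen n S"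
  using is_idealD(2)[OF is_ideal_ideal_gen _ ideal_gen_uminus] by (metis diff_conv_add_uminus)

lemma is_ideal_ideal_sum:
  assumes J: "\<forall>i<s. is_ideal n (J i)"
  shows "is_ideal n (ideal_sum s J)"
  unfolding is_ideal_def
proof (intro conjI ballI)
  have "\<forall>i<s. (\<lambda>_. 0) i \<in> J i" using J by (simp add: is_ideal_def)
  then show "0 \<in> ideal_sum s J" unfolding ideal_sum_def by (intro CollectI exI[of _ "\<lambda>_. 0"]) simp
next
  fix f g assume "f \<in> ideal_sum s J" "g \<in> ideal_sum s J"
  then obtain f' g' where fg: "\<forall>i<s. f' i \<in> J i" "f = (\<Sum>i<s. f' i)"
    "\<forall>i<s. g' i \<in> J i" "g = (\<Sum>i<s. g' i)"
    unfolding ideal_sum_def by blast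
  have "\<forall>i<s. f' i + g' i \<in> J i" using fg J by (simp add: is_ideal_def)
  moreover have "f + g = (\<Sum>i<s. f' i + g' i)" using fg by (simp add: sum.distrib)
  ultimately show "f + g \<in> ideal_sum s J" unfolding ideal_sum_def by (intro CollectI exI) (rule conjI)
next
  fix r f :: "'a mpoly" assume r: "r \<in> polyring n" and "f \<in> ideal_sum s J"
  then obtain f' where f': "\<forall>i<s. f' i \<in> J i" "f = (\<Sum>i<s. f' i)"
    unfolding ideal_sum_def by blast
  have "\<forall>i<s. r * f' i \<in> J i" using f' r J by (simp add: is_ideal_def)
  moreover have "r * f = (\<Sum>i<s. r * f' i)" using f' by (simp add: sum_distrib_left)
  ultimately show "r * f \<in> ideal_sum s J" unfolding ideal_sum_def by (intro CollectI exI) (rule conjI)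
qed

lemma irredundant_generating_subset:
  assumes "finite G0"
  obtains G where "G \<subseteq> G0" "ideal_gen n G = ideal_gen n G0" "\<forall>b\<in>G. b \<notin> ideal_gen n (G - {b})"
proof -
  let ?P = "\<lambda>G. G \<subseteq> G0 \<and> ideal_gen n G = ideal_gen n G0"
  have "\<exists>G. ?P G \<and> (\<forall>G'. ?P G' \<longrightarrow> card G \<le> card G')"
    by (rule ex_has_least_nat[of ?P G0]) simp
  then obtain G where G: "G \<subseteq> G0" "ideal_gen n G = ideal_gen n G0"
    and min: "\<forall>G'. ?P G' \<longrightarrow> card G \<le> card G'"
    by blast
  have "b \<notin> ideal_gen n (G - {b})" if b: "b \<in> G" for b
  proof
    assume b_in: "b \<in> ideal_gen n (G - {b})"
    have "G \<subseteq> ideal_gen n (G - {b})"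
    proof
      fix g assume "g \<in> G"
      then show "g \<in> ideal_gen n (G - {b})" using b_in by (cases "g = b") (auto intro: ideal_gen_base)
    qed
    then have "ideal_gen n G \<subseteq> ideal_gen n (G - {b})"
      by (rule ideal_gen_least[OF _ is_ideal_ideal_gen])
    with ideal_gen_mono[of "G - {b}" G n] G(2) have "?P (G - {b})" using G(1) by blast
    then have "card G \<le> card (G - {b})" using min by blast
    moreover have "finite G" using G(1) assms finite_subset by blast
    ultimately show False using card_Diff1_less[OF _ b] by fastforce
  qed
  with G that show ?thesis by blast
qed

lemma ideal_sum_upper:
  assumes "\<forall>j<s. 0 \<in> J j" "i < s"
  shows "J i \<subseteq> ideal_sum s J"
proof
  fix f assume f: "f \<in> J i"
  have "f = (\<Sum>j<s. if j = i then f else 0)" using assms(2) by simp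
  moreover have "\<forall>j<s. (if j = i then f else 0) \<in> J j" using assms(1) f by simp
  ultimately show "f \<in> ideal_sum s J" unfolding ideal_sum_def by (intro CollectI exI) (rule conjI)
qed

lemma ideal_sum_least:
  assumes "\<forall>i<s. J i \<subseteq> I" "is_ideal n I"
  shows "ideal_sum s J \<subseteq> I"
proof
  fix f assume "f \<in> ideal_sum s J"
  then obtain g where "\<forall>i<s. g i \<in> J i" "f = (\<Sum>i<s. g i)" unfolding ideal_sum_def by blast
  with assms(1) show "f \<in> I" by (auto intro!: sum_in_ideal[OF assms(2)])
qed

lemma ideal_sum_principal:
  assumes "\<forall>i<s. J i = ideal_gen n {\<beta> i}"
  shows "ideal_sum s J = ideal_gen n (\<beta> ` {..<s})"
proof
  show "ideal_sum s J \<subseteq> ideal_gen n (\<beta> ` {..<s})"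
    using assms by (intro ideal_sum_least[OF _ is_ideal_ideal_gen]) (auto intro!: ideal_gen_mono)
  have ideals: "\<forall>i<s. is_ideal n (J i)" using assms by (simp add: is_ideal_ideal_gen)
  have "\<beta> i \<in> ideal_sum s J" if "i < s" for i
    using ideal_sum_upper[of s J i] ideals assms that by (auto intro: is_idealD ideal_gen_base)
  then show "ideal_gen n (\<beta> ` {..<s}) \<subseteq> ideal_sum s J"
    using ideals by (intro ideal_gen_least is_ideal_ideal_sum) auto
qed

lemma radical_mono: "A \<subseteq> B \<Longrightarrow> radical n A \<subseteq> radical n B"
  unfolding radical_def by blast

lemma radical_radical: "radical n (radical n A) = radical n A"
proof
  show "radical n (radical n A) \<subseteq> radical n A"
    unfolding radical_def by (auto simp flip: power_mult)
  show "radical n A \<subseteq> radical n (radical n A)"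
  proof
    fix f assume "f \<in> radical n A"
    then obtain k where "f \<in> polyring n" "(f ^ k) ^ 1 \<in> A" by (auto simp: radical_def)
    then show "f \<in> radical n (radical n A)" unfolding radical_def by (blast intro: polyring_power)
  qed
qed

lemma subset_radical: "A \<subseteq> polyring n \<Longrightarrow> A \<subseteq> radical n A"
  unfolding radical_def by (auto intro: exI[of _ 1])

section \<open>Homogeneous components and the toric ideal\<close>

definition hom_part :: "((nat \<Rightarrow>\<^sub>0 nat) \<Rightarrow> 'b) \<Rightarrow> 'b \<Rightarrow> 'a::field mpoly \<Rightarrow> 'a mpoly" where
  "hom_part D b p = Abs_poly_mapping (\<lambda>e. if D e = b then Poly_Mapping.lookup p e else 0)"

lemma lookup_hom_part:
  "Poly_Mapping.lookup (hom_part D b p) e = (if D e = b then Poly_Mapping.lookup p e else 0)"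
proof -
  have "finite {e. (if D e = b then Poly_Mapping.lookup p e else 0) \<noteq> 0}"
    by (rule finite_subset[of _ "Poly_Mapping.keys p"]) (auto simp: in_keys_iff split: if_splits)
  then show ?thesis unfolding hom_part_def by simp
qed

lemma keys_hom_part: "Poly_Mapping.keys (hom_part D b p) = {e \<in> Poly_Mapping.keys p. D e = b}"
  by (auto simp: in_keys_iff lookup_hom_part split: if_splits)

lemma hom_part_add: "hom_part D b (p + q) = hom_part D b p + hom_part D b q"
  by (rule poly_mapping_eqI) (simp add: lookup_hom_part lookup_add)

lemma hom_part_diff: "hom_part D b (p - q) = hom_part D b p - hom_part D b q"
  by (rule poly_mapping_eqI) (simp add: lookup_hom_part lookup_minus)

lemma hom_part_0 [simp]: "hom_part D b 0 = 0"
  by (rule poly_mapping_eqI) (simp add: lookup_hom_part)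

lemma hom_part_sum: "hom_part D b (sum f A) = (\<Sum>i\<in>A. hom_part D b (f i))"
  by (induction A rule: infinite_finite_induct) (simp_all add: hom_part_add)

lemma hom_part_single:
  "hom_part D b (Poly_Mapping.single e c) = (if D e = b then Poly_Mapping.single e c else 0)"
  by (rule poly_mapping_eqI) (auto simp: lookup_hom_part lookup_single when_def)

lemma hom_part_polyring: "p \<in> polyring n \<Longrightarrow> hom_part D b p \<in> polyring n"
  unfolding polyring_iff keys_hom_part by auto

lemma hom_part_single_mult:
  fixes D :: "(nat \<Rightarrow>\<^sub>0 nat) \<Rightarrow> 'b::ab_group_add"
  assumes D_add: "\<And>c e. D (c + e) = D c + D e"
  shows "hom_part D b (Poly_Mapping.single c x * p) = Poly_Mapping.single c x * hom_part D (b - D c) p"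
proof -
  have "hom_part D b (Poly_Mapping.single c x * p) =
      (\<Sum>e\<in>Poly_Mapping.keys p. hom_part D b (Poly_Mapping.single (c + e) (x * Poly_Mapping.lookup p e)))"
    by (simp add: single_mult_eq_sum hom_part_sum)
  also have "\<dots> = (\<Sum>e\<in>Poly_Mapping.keys p. Poly_Mapping.single c x *
      (if D e = b - D c then Poly_Mapping.single e (Poly_Mapping.lookup p e) else 0))"
    by (rule sum.cong) (auto simp: hom_part_single D_add mult_single algebra_simps)
  also have "\<dots> = Poly_Mapping.single c x * hom_part D (b - D c) p"
    by (subst (2) mpoly_eq_sum_single[of p]) (simp add: hom_part_sum hom_part_single sum_distrib_left)
  finally show ?thesis .
qed

definition coeff_sum :: "'a::field mpoly \<Rightarrow> 'a" where
  "coeff_sum p = (\<Sum>e\<in>Poly_Mapping.keys p. Poly_Mapping.lookup p e)"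

lemma coeff_sum_superset:
  "finite E \<Longrightarrow> Poly_Mapping.keys p \<subseteq> E \<Longrightarrow> coeff_sum p = (\<Sum>e\<in>E. Poly_Mapping.lookup p e)"
  unfolding coeff_sum_def by (rule sum.mono_neutral_left) (auto simp: in_keys_iff)

lemma coeff_sum_add: "coeff_sum (p + q) = coeff_sum p + coeff_sum q"
proof -
  let ?E = "Poly_Mapping.keys p \<union> Poly_Mapping.keys q"
  have "coeff_sum (p + q) = (\<Sum>e\<in>?E. Poly_Mapping.lookup (p + q) e)"
    using keys_add[of p q] by (intro coeff_sum_superset) auto
  also have "\<dots> = coeff_sum p + coeff_sum q"
    by (simp add: lookup_add sum.distrib coeff_sum_superset[symmetric])
  finally show ?thesis .
qed

lemma coeff_sum_diff: "coeff_sum (p - q) = coeff_sum p - coeff_sum q"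
  using coeff_sum_add[of "p - q" q] by (simp add: algebra_simps)

lemma coeff_sum_single [simp]: "coeff_sum (Poly_Mapping.single e c) = c"
  by (simp add: coeff_sum_def)

lemma coeff_sum_0 [simp]: "coeff_sum 0 = 0"
  by (simp add: coeff_sum_def)

lemma coeff_sum_sum: "coeff_sum (sum f A) = (\<Sum>i\<in>A. coeff_sum (f i))"
  by (induction A rule: infinite_finite_induct) (auto simp: coeff_sum_add)

lemma coeff_sum_single_mult: "coeff_sum (Poly_Mapping.single c x * p) = x * coeff_sum p"
proof -
  have "coeff_sum (Poly_Mapping.single c x * p) = (\<Sum>e\<in>Poly_Mapping.keys p. x * Poly_Mapping.lookup p e)"
    by (simp add: single_mult_eq_sum coeff_sum_sum)
  then show ?thesis by (simp add: coeff_sum_def sum_distrib_left)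
qed

lemma Adeg_add: "Adeg n m a (c + e) = Adeg n m a c + Adeg n m a e"
  by (auto simp: fun_eq_iff Adeg_def lookup_add sum.distrib algebra_simps)

lemma Adeg_0 [simp]: "Adeg n m a 0 = 0"
  by (auto simp: fun_eq_iff Adeg_def)

lemma toric_ideal_iff:
  "p \<in> toric_ideal n m a \<longleftrightarrow> p \<in> polyring n \<and> (\<forall>b. coeff_sum (hom_part (Adeg n m a) b p) = 0)"
proof -
  have "(\<Sum>e \<in> {e \<in> Poly_Mapping.keys p. Adeg n m a e = b}. Poly_Mapping.lookup p e) =
      coeff_sum (hom_part (Adeg n m a) b p)" for b
    unfolding coeff_sum_def keys_hom_part by (rule sum.cong) (auto simp: lookup_hom_part)
  then show ?thesis unfolding toric_ideal_def by auto
qed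

lemma toric_ideal_subset_polyring: "toric_ideal n m a \<subseteq> polyring n"
  by (auto simp: toric_ideal_iff)

lemma is_ideal_toric_ideal: "is_ideal n (toric_ideal n m a :: 'a::field mpoly set)"
  unfolding is_ideal_def
proof (intro conjI ballI)
  show "0 \<in> toric_ideal n m a"
    by (simp add: toric_ideal_iff)
next
  fix p q :: "'a mpoly" assume "p \<in> toric_ideal n m a" "q \<in> toric_ideal n m a"
  then show "p + q \<in> toric_ideal n m a"
    by (simp add: toric_ideal_iff hom_part_add coeff_sum_add polyring_add)
next
  fix r p :: "'a mpoly" assume r: "r \<in> polyring n" and p: "p \<in> toric_ideal n m a"
  have "coeff_sum (hom_part (Adeg n m a) b (Poly_Mapping.single e c * p)) = 0" for b e c
    using p by (simp add: toric_ideal_iff hom_part_single_mult[OF Adeg_add] coeff_sum_single_mult)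
  moreover have "r * p = (\<Sum>e\<in>Poly_Mapping.keys r. Poly_Mapping.single e (Poly_Mapping.lookup r e) * p)"
    by (subst mpoly_eq_sum_single[of r]) (simp add: sum_distrib_right)
  ultimately have "coeff_sum (hom_part (Adeg n m a) b (r * p)) = 0" for b
    by (simp add: hom_part_sum coeff_sum_sum)
  with r p show "r * p \<in> toric_ideal n m a"
    by (simp add: toric_ideal_iff polyring_mult)
qed

lemma is_ideal_if_toric: "is_toric_ideal n J \<Longrightarrow> is_ideal n J"
  unfolding is_toric_ideal_def using is_ideal_toric_ideal by blast

lemma keys_binomial: "u \<noteq> v \<Longrightarrow> Poly_Mapping.keys (X u - X v :: 'a::field mpoly) = {u, v}"
  by (auto simp: in_keys_iff lookup_minus lookup_single when_def split: if_splits)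

lemma binomial_in_toric_ideal_iff:
  "(X u - X v :: 'a::field mpoly) \<in> toric_ideal n m a \<longleftrightarrow>
     u = v \<or> (in_vars n u \<and> in_vars n v \<and> Adeg n m a u = Adeg n m a v)"
proof (cases "u = v")
  case True
  then show ?thesis using is_idealD(1)[OF is_ideal_toric_ideal] by simp
next
  case False
  have "coeff_sum (hom_part (Adeg n m a) b (X u - X v :: 'a mpoly)) =
      (if Adeg n m a u = b then 1 else 0) - (if Adeg n m a v = b then 1 else 0)" for b
    by (simp add: hom_part_diff hom_part_single coeff_sum_diff)
  then have "(\<forall>b. coeff_sum (hom_part (Adeg n m a) b (X u - X v :: 'a mpoly)) = 0) \<longleftrightarrow>
      Adeg n m a u = Adeg n m a v"
    by (auto dest: spec[of _ "Adeg n m a u"] split: if_splits)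
  moreover have "(X u - X v :: 'a mpoly) \<in> polyring n \<longleftrightarrow> in_vars n u \<and> in_vars n v"
    using keys_binomial[OF False, where 'a='a] by (simp add: polyring_iff)
  ultimately show ?thesis using False by (simp add: toric_ideal_iff)
qed

definition fiber_binomials :: "((nat \<Rightarrow>\<^sub>0 nat) \<Rightarrow> 'b) \<Rightarrow> (nat \<Rightarrow>\<^sub>0 nat) set \<Rightarrow> 'a::field mpoly set" where
  "fiber_binomials D E = {X e - X e' | e e'. e \<in> E \<and> e' \<in> E \<and> D e = D e'}"

lemma finite_fiber_binomials: "finite E \<Longrightarrow> finite (fiber_binomials D E)"
proof -
  assume "finite E"
  have "fiber_binomials D E \<subseteq> (\<lambda>(e, e'). X e - X e') ` (E \<times> E)"
    unfolding fiber_binomials_def by auto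
  then show ?thesis using \<open>finite E\<close> by (auto intro: finite_subset)
qed

lemma other_key_in_fiber:
  assumes "coeff_sum (hom_part D (D e1) p) = 0" "e1 \<in> Poly_Mapping.keys p"
  obtains e0 where "e0 \<in> Poly_Mapping.keys p" "e0 \<noteq> e1" "D e0 = D e1"
proof (rule ccontr)
  assume "\<not> thesis"
  then have "Poly_Mapping.keys (hom_part D (D e1) p) = {e1}"
    using that assms(2) by (auto simp: keys_hom_part)
  then have "coeff_sum (hom_part D (D e1) p) = Poly_Mapping.lookup p e1"
    by (simp add: coeff_sum_def lookup_hom_part)
  with assms show False by (simp add: in_keys_iff)
qed

text \<open>Moving the coefficient of a monomial onto another monomial of the same degree, which
  exists because every degree component has coefficient sum zero, subtracts a multiple of a
  fiber binomial and shrinks the support.\<close>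

lemma in_ideal_gen_fiber_binomials:
  assumes "Poly_Mapping.keys p \<subseteq> E" "\<forall>e\<in>E. in_vars n e" "\<forall>b. coeff_sum (hom_part D b p) = 0"
  shows "(p::'a::field mpoly) \<in> ideal_gen n (fiber_binomials D E)"
  using assms(1,3)
proof (induction "card (Poly_Mapping.keys p)" arbitrary: p rule: less_induct)
  case less
  show ?case
  proof (cases "p = 0")
    case True
    then show ?thesis by (simp add: ideal_gen_0)
  next
    case False
    then obtain e1 where e1: "e1 \<in> Poly_Mapping.keys p"
      by (metis all_not_in_conv keys_eq_empty)
    obtain e0 where e0: "e0 \<in> Poly_Mapping.keys p" "e0 \<noteq> e1" "D e0 = D e1"
      using other_key_in_fiber less.prems(2) e1 by metis
    define c where "c = Poly_Mapping.lookup p e1"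
    define p' where "p' = p - Poly_Mapping.single e1 c + Poly_Mapping.single e0 c"
    have p_eq: "p = cpoly c * (X e1 - X e0) + p'"
      by (simp add: p'_def right_diff_distrib mult_single)
    have keys_p': "Poly_Mapping.keys p' \<subseteq> Poly_Mapping.keys p - {e1}"
      using e0 e1 by (auto simp: p'_def in_keys_iff lookup_add lookup_minus lookup_single when_def c_def
          split: if_splits)
    have "card (Poly_Mapping.keys p') < card (Poly_Mapping.keys p)"
      by (rule psubset_card_mono) (use keys_p' e1 in auto)
    moreover have "Poly_Mapping.keys p' \<subseteq> E" using keys_p' less.prems(1) by auto
    moreover have "\<forall>b. coeff_sum (hom_part D b p') = 0"
      using less.prems(2) e0
      by (simp add: p'_def hom_part_add hom_part_diff coeff_sum_add coeff_sum_diff hom_part_single)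
    ultimately have "p' \<in> ideal_gen n (fiber_binomials D E)" using less.hyps by blast
    moreover have "(X e1 - X e0 :: 'a mpoly) \<in> fiber_binomials D E"
      unfolding fiber_binomials_def using e0 e1 less.prems(1)
      by (intro CollectI exI[of _ e1] exI[of _ e0]) auto
    ultimately show ?thesis
      by (subst p_eq) (rule ideal_gen_cons, auto intro: polyring_cpoly)
  qed
qed

lemma toric_ideal_in_ideal_gen_fiber_binomials:
  "p \<in> toric_ideal n m a \<Longrightarrow>
    (p::'a::field mpoly) \<in> ideal_gen n (fiber_binomials (Adeg n m a) (Poly_Mapping.keys p))"
  by (intro in_ideal_gen_fiber_binomials) (auto simp: toric_ideal_iff polyring_iff)

section \<open>The lattice of a toric ideal\<close>

definition kerZ :: "nat \<Rightarrow> nat \<Rightarrow> (nat \<Rightarrow> nat \<Rightarrow> int) \<Rightarrow> (nat \<Rightarrow> int) set" where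
  "kerZ n m a = {z. (\<forall>i\<ge>n. z i = 0) \<and> (\<forall>j<m. (\<Sum>i<n. z i * a i j) = 0)}"

definition exp_diff :: "(nat \<Rightarrow>\<^sub>0 nat) \<Rightarrow> (nat \<Rightarrow>\<^sub>0 nat) \<Rightarrow> nat \<Rightarrow> int" where
  "exp_diff e e' = (\<lambda>i. int (Poly_Mapping.lookup e i) - int (Poly_Mapping.lookup e' i))"

definition pos_part :: "nat \<Rightarrow> (nat \<Rightarrow> int) \<Rightarrow> (nat \<Rightarrow>\<^sub>0 nat)" where
  "pos_part n z = Abs_poly_mapping (\<lambda>i. if i < n then nat (z i) else 0)"

abbreviation lattice_binomial :: "nat \<Rightarrow> (nat \<Rightarrow> int) \<Rightarrow> 'a::field mpoly" where
  "lattice_binomial n z \<equiv> X (pos_part n z) - X (pos_part n (- z))"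

lemma lookup_pos_part: "Poly_Mapping.lookup (pos_part n z) i = (if i < n then nat (z i) else 0)"
proof -
  have "finite {i. (if i < n then nat (z i) else 0) \<noteq> 0}"
    by (rule finite_subset[of _ "{..<n}"]) (auto split: if_splits)
  then show ?thesis unfolding pos_part_def by simp
qed

lemma in_vars_pos_part: "in_vars n (pos_part n z)"
  by (auto simp: in_vars_def in_keys_iff lookup_pos_part split: if_splits)

lemma exp_diff_pos_part: "\<forall>i\<ge>n. z i = 0 \<Longrightarrow> exp_diff (pos_part n z) (pos_part n (- z)) = z"
  by (auto simp: fun_eq_iff exp_diff_def lookup_pos_part)

lemma exp_diff_eq_0_iff: "exp_diff e e' = 0 \<longleftrightarrow> e = e'"
  by (auto simp: exp_diff_def fun_eq_iff poly_mapping_eqI)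

lemma Adeg_eq_iff_exp_diff:
  assumes "in_vars n e" "in_vars n e'"
  shows "Adeg n m a e = Adeg n m a e' \<longleftrightarrow> exp_diff e e' \<in> kerZ n m a"
proof -
  have "(\<Sum>i<n. exp_diff e e' i * a i j) =
      (\<Sum>i<n. int (Poly_Mapping.lookup e i) * a i j) - (\<Sum>i<n. int (Poly_Mapping.lookup e' i) * a i j)" for j
    unfolding exp_diff_def by (simp add: sum_subtractf algebra_simps)
  moreover have "\<forall>i\<ge>n. exp_diff e e' i = 0"
    using assms by (simp add: exp_diff_def in_vars_lookup)
  ultimately show ?thesis unfolding Adeg_def kerZ_def fun_eq_iff by auto
qed

lemma lattice_binomial_in_toric_ideal_iff:
  assumes "\<forall>i\<ge>n. z i = 0"
  shows "(lattice_binomial n z :: 'a::field mpoly) \<in> toric_ideal n m a \<longleftrightarrow> z \<in> kerZ n m a"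
proof (cases "pos_part n z = pos_part n (- z)")
  case True
  then have "z = 0" using exp_diff_pos_part[OF assms] by (metis exp_diff_eq_0_iff)
  then show ?thesis using True is_idealD(1)[OF is_ideal_toric_ideal] by (simp add: kerZ_def)
next
  case False
  then show ?thesis
    by (simp add: binomial_in_toric_ideal_iff in_vars_pos_part Adeg_eq_iff_exp_diff exp_diff_pos_part[OF assms])
qed

lemma toric_ideal_subset_iff:
  "(toric_ideal n m' a' :: 'a::field mpoly set) \<subseteq> toric_ideal n m a \<longleftrightarrow> kerZ n m' a' \<subseteq> kerZ n m a"
proof
  assume sub: "(toric_ideal n m' a' :: 'a mpoly set) \<subseteq> toric_ideal n m a"
  show "kerZ n m' a' \<subseteq> kerZ n m a"
  proof
    fix z assume z: "z \<in> kerZ n m' a'"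
    then have supp: "\<forall>i\<ge>n. z i = 0" by (simp add: kerZ_def)
    then have "(lattice_binomial n z :: 'a mpoly) \<in> toric_ideal n m' a'"
      using z by (simp add: lattice_binomial_in_toric_ideal_iff)
    then have "(lattice_binomial n z :: 'a mpoly) \<in> toric_ideal n m a"
      using sub by blast
    then show "z \<in> kerZ n m a"
      using supp by (simp add: lattice_binomial_in_toric_ideal_iff)
  qed
next
  assume sub: "kerZ n m' a' \<subseteq> kerZ n m a"
  show "(toric_ideal n m' a' :: 'a mpoly set) \<subseteq> toric_ideal n m a"
  proof
    fix p :: "'a mpoly" assume p: "p \<in> toric_ideal n m' a'"
    have "fiber_binomials (Adeg n m' a') (Poly_Mapping.keys p) \<subseteq> (toric_ideal n m a :: 'a mpoly set)"
      using toric_ideal_subset_polyring p sub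
      by (fastforce simp: fiber_binomials_def polyring_iff binomial_in_toric_ideal_iff Adeg_eq_iff_exp_diff)
    then show "p \<in> toric_ideal n m a"
      using toric_ideal_in_ideal_gen_fiber_binomials[OF p] ideal_gen_least[OF _ is_ideal_toric_ideal] by blast
  qed
qed

lemma kerZ_lincomb:
  assumes "u \<in> kerZ n m a" "v \<in> kerZ n m a"
  shows "(\<lambda>i. c * u i + d * v i) \<in> kerZ n m a"
proof -
  have "(\<Sum>i<n. (c * u i + d * v i) * a i j) = c * (\<Sum>i<n. u i * a i j) + d * (\<Sum>i<n. v i * a i j)" for j
    by (simp add: sum.distrib sum_distrib_left distrib_right mult.assoc)
  then show ?thesis using assms by (auto simp: kerZ_def)
qed

lemma kerZ_cancel:
  assumes "(\<lambda>i. N * z i) \<in> kerZ n m a" "N \<noteq> 0"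
  shows "z \<in> kerZ n m a"
proof -
  have "N * (\<Sum>i<n. z i * a i j) = 0" if "j < m" for j
    using assms(1) that by (simp add: kerZ_def sum_distrib_left mult.assoc)
  then show ?thesis using assms by (auto simp: kerZ_def)
qed

lemma (in vector_space) in_span_if_card_eq_dim:
  assumes B: "B \<subseteq> V" "independent B" "card B = dim V" "0 < card B" and x: "x \<in> V"
  shows "x \<in> span B"
proof (rule ccontr)
  assume x_notin: "x \<notin> span B"
  obtain C where C: "C \<subseteq> V" "independent C" "V \<subseteq> span C" "card C = dim V"
    using basis_exists by blast
  then have "finite C" using B(3,4) card.infinite by force
  moreover have "insert x B \<subseteq> span C" using B(1) x C(3) by blast
  moreover have "independent (insert x B)" using x_notin B(2) by (simp add: independent_insert)
  ultimately have "card (insert x B) \<le> card C" using independent_span_bound by blast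
  moreover have "finite B" "x \<notin> B" using B(4) x_notin span_base card.infinite by force+
  ultimately show False using B(3) C(4) by simp
qed

interpretation qv: vector_space "\<lambda>(c::rat) (v::nat \<Rightarrow> rat). (\<lambda>i. c * v i)"
  by unfold_locales (simp_all add: fun_eq_iff algebra_simps)

definition rat_vec :: "(nat \<Rightarrow> int) \<Rightarrow> nat \<Rightarrow> rat" where
  "rat_vec z = (\<lambda>i. of_int (z i))"

definition parallel :: "nat \<Rightarrow> (nat \<Rightarrow> int) \<Rightarrow> (nat \<Rightarrow> int) \<Rightarrow> bool" where
  "parallel n z w \<longleftrightarrow> (\<forall>p<n. \<forall>q<n. z p * w q = z q * w p)"

lemma rat_vec_in_kerQ_iff: "rat_vec z \<in> kerQ n m a \<longleftrightarrow> z \<in> kerZ n m a"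
proof -
  have h: "(\<Sum>i<n. rat_of_int (z i) * rat_of_int (a i j)) = rat_of_int (\<Sum>i<n. z i * a i j)" for j
    by simp
  show ?thesis
    unfolding kerQ_def kerZ_def rat_vec_def mem_Collect_eq h of_int_eq_0_iff ..
qed

lemma common_denominator:
  fixes v :: "nat \<Rightarrow> rat"
  assumes "finite A"
  obtains N :: int where "N > 0" "\<forall>i\<in>A. of_int N * v i \<in> \<int>"
  using assms
proof (induction A arbitrary: thesis rule: finite_induct)
  case empty
  then show ?case by (metis empty_iff zero_less_one)
next
  case (insert x A)
  then obtain N where N: "N > 0" "\<forall>i\<in>A. of_int N * v i \<in> \<int>" by blast
  obtain p q where pq: "quotient_of (v x) = (p, q)" by (cases "quotient_of (v x)")
  have q: "q > 0" using quotient_of_denom_pos[OF pq] .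
  have "of_int (N * q) * v x = of_int (N * p)"
    using q by (simp add: quotient_of_div[OF pq])
  moreover have "of_int (N * q) * v i = of_int q * (of_int N * v i)" for i by simp
  ultimately have "\<forall>i\<in>insert x A. of_int (N * q) * v i \<in> \<int>"
    using N(2) by (metis Ints_mult Ints_of_int insert_iff)
  moreover have "N * q > 0" using N(1) q by simp
  ultimately show ?case using insert.prems by blast
qed

lemma kerQ_clear_denominators:
  assumes v: "v \<in> kerQ n m a"
  obtains N :: int and z where "N > 0" "z \<in> kerZ n m a" "rat_vec z = (\<lambda>i. of_int N * v i)"
proof -
  obtain N :: int where N: "N > 0" "\<forall>i\<in>{..<n}. of_int N * v i \<in> \<int>"
    using common_denominator[of "{..<n}" v] by blast
  have "of_int N * v i \<in> \<int>" for i
    using N(2) v by (cases "i < n") (auto simp: kerQ_def)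
  then have z: "rat_vec (\<lambda>i. \<lfloor>of_int N * v i\<rfloor>) = (\<lambda>i. of_int N * v i)"
    by (simp add: rat_vec_def fun_eq_iff)
  have "(\<lambda>i. of_int N * v i) \<in> kerQ n m a"
    using v by (auto simp: kerQ_def mult.assoc simp flip: sum_distrib_left)
  then have "(\<lambda>i. \<lfloor>of_int N * v i\<rfloor>) \<in> kerZ n m a" by (simp flip: z rat_vec_in_kerQ_iff)
  with N(1) z that show ?thesis by blast
qed

lemma rat_vec_in_span_iff_parallel:
  assumes "\<forall>i\<ge>n. z i = 0" "\<forall>i\<ge>n. w i = 0" "w \<noteq> 0"
  shows "rat_vec z \<in> qv.span {rat_vec w} \<longleftrightarrow> parallel n z w"
proof
  assume "rat_vec z \<in> qv.span {rat_vec w}"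
  then obtain c where c: "rat_vec z = (\<lambda>i. c * rat_vec w i)" by (auto simp: qv.span_singleton)
  show "parallel n z w" unfolding parallel_def
  proof (intro allI impI)
    fix p q
    have "(of_int (z p * w q) :: rat) = of_int (z q * w p)"
      using fun_cong[OF c, of p] fun_cong[OF c, of q] by (simp add: rat_vec_def)
    then show "z p * w q = z q * w p" by (simp only: of_int_eq_iff)
  qed
next
  assume par: "parallel n z w"
  obtain q0 where q0: "q0 < n" "w q0 \<noteq> 0"
    using assms(2,3) by (metis fun_eq_iff not_le zero_fun_def)
  define c :: rat where "c = of_int (z q0) / of_int (w q0)"
  have "rat_vec z i = c * rat_vec w i" for i
  proof (cases "i < n")
    case True
    then have "(of_int (z i) :: rat) * of_int (w q0) = of_int (z q0) * of_int (w i)"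
      using par q0 unfolding parallel_def by (metis of_int_mult)
    then show ?thesis using q0 by (simp add: c_def rat_vec_def field_simps)
  next
    case False
    then show ?thesis using assms(1,2) by (simp add: rat_vec_def)
  qed
  then show "rat_vec z \<in> qv.span {rat_vec w}"
    by (auto simp: qv.span_singleton fun_eq_iff)
qed

lemma kerQ_not_subset_line:
  assumes "dimQ (kerQ n m a) = 2"
  shows "\<not> kerQ n m a \<subseteq> qv.span {v}"
proof
  assume "kerQ n m a \<subseteq> qv.span {v}"
  then have "qv.dim (kerQ n m a) \<le> card {v}" by (rule qv.dim_le_card) simp
  with assms show False by (simp add: dimQ_def)
qed

lemma kerZ_nonzero:
  assumes "dimQ (kerQ n m a) = 2"
  obtains z where "z \<in> kerZ n m a" "z \<noteq> 0"
proof -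
  obtain v where "v \<in> kerQ n m a" "v \<notin> qv.span {0}"
    using kerQ_not_subset_line[OF assms] by blast
  then have v: "v \<in> kerQ n m a" "v \<noteq> 0" using qv.span_zero by auto
  obtain N :: int and z where Nz: "N > 0" "z \<in> kerZ n m a" "rat_vec z = (\<lambda>i. of_int N * v i)"
    using kerQ_clear_denominators[OF v(1)] by blast
  obtain i where "v i \<noteq> 0" using v(2) by (auto simp: fun_eq_iff)
  then have "of_int (z i) \<noteq> (0 :: rat)"
    using Nz(1) fun_cong[OF Nz(3), of i] by (simp add: rat_vec_def)
  then have "z \<noteq> 0" by auto
  with Nz(2) that show ?thesis by blast
qed

lemma kerZ_not_parallel:
  assumes "dimQ (kerQ n m a) = 2" "\<forall>i\<ge>n. w i = 0" "w \<noteq> 0"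
  obtains z where "z \<in> kerZ n m a" "\<not> parallel n z w"
proof -
  obtain v where v: "v \<in> kerQ n m a" "v \<notin> qv.span {rat_vec w}"
    using kerQ_not_subset_line[OF assms(1)] by blast
  obtain N :: int and z where Nz: "N > 0" "z \<in> kerZ n m a" "rat_vec z = (\<lambda>i. of_int N * v i)"
    using kerQ_clear_denominators[OF v(1)] by blast
  have "v = (\<lambda>i. inverse (of_int N) * rat_vec z i)"
    using Nz(1,3) by (simp add: fun_eq_iff)
  then have "rat_vec z \<notin> qv.span {rat_vec w}"
    using v(2) qv.span_scale by metis
  then have "\<not> parallel n z w"
    using rat_vec_in_span_iff_parallel[of n z w] Nz(2) assms(2,3) by (auto simp: kerZ_def)
  with Nz(2) that show ?thesis by blast
qed

lemma kerZ_rank_two: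
  assumes dim: "dimQ (kerQ n m a) = 2"
    and vw: "v \<in> kerZ n m a" "w \<in> kerZ n m a" "\<not> parallel n v w"
    and u: "u \<in> kerZ n m a"
  obtains N c d :: int where "N \<noteq> 0" "\<And>i. N * u i = c * v i + d * w i"
proof -
  have w0: "w \<noteq> 0" using vw(3) by (auto simp: parallel_def)
  have w_ne: "rat_vec w \<noteq> 0" using w0 by (auto simp: rat_vec_def fun_eq_iff)
  have v_notin: "rat_vec v \<notin> qv.span {rat_vec w}"
    using rat_vec_in_span_iff_parallel[of n v w] vw w0 by (auto simp: kerZ_def)
  then have indep: "qv.independent {rat_vec v, rat_vec w}"
    using w_ne by (simp add: qv.independent_insert)
  have "rat_vec u \<in> qv.span {rat_vec v, rat_vec w}"
  proof (rule qv.in_span_if_card_eq_dim)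
    show "{rat_vec v, rat_vec w} \<subseteq> kerQ n m a" "rat_vec u \<in> kerQ n m a"
      using u vw rat_vec_in_kerQ_iff by blast+
    have "rat_vec v \<noteq> rat_vec w" using v_notin qv.span_base by auto
    then show "card {rat_vec v, rat_vec w} = qv.dim (kerQ n m a)" "0 < card {rat_vec v, rat_vec w}"
      using dim by (simp_all add: dimQ_def)
  qed (rule indep)
  then obtain c' where "rat_vec u - (\<lambda>i. c' * rat_vec v i) \<in> qv.span {rat_vec w}"
    by (auto simp: qv.span_breakdown_eq)
  then obtain d' where "rat_vec u - (\<lambda>i. c' * rat_vec v i) = (\<lambda>i. d' * rat_vec w i)"
    by (auto simp: qv.span_singleton)
  then have uvw: "rat_vec u i = c' * rat_vec v i + d' * rat_vec w i" for i
    using fun_cong[of _ _ i] by (fastforce simp: fun_diff_def algebra_simps)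
  obtain N :: int where N: "N > 0" "\<forall>i\<in>{0, 1::nat}. of_int N * (if i = 0 then c' else d') \<in> \<int>"
    using common_denominator[of "{0, 1::nat}" "\<lambda>i. if i = 0 then c' else d'"] by blast
  then have "of_int N * c' \<in> \<int>" "of_int N * d' \<in> \<int>" by auto
  then obtain c d :: int where cd: "of_int N * c' = of_int c" "of_int N * d' = of_int d"
    by (auto elim!: Ints_cases)
  have "N * u i = c * v i + d * w i" for i
  proof -
    have "(of_int (N * u i) :: rat) = of_int N * c' * of_int (v i) + of_int N * d' * of_int (w i)"
      using uvw[of i] by (simp add: rat_vec_def algebra_simps)
    also have "\<dots> = of_int (c * v i + d * w i)" by (simp add: cd)
    finally show ?thesis by (simp only: of_int_eq_iff)
  qed
  moreover have "N \<noteq> 0" using N(1) by simp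
  ultimately show ?thesis using that by blast
qed

section \<open>Toric ideals of cyclic lattices\<close>

lemma X_pos_part_mult: "(X (pos_part n (\<lambda>i. int k * w i)) :: 'a::field mpoly) = X (pos_part n w) ^ k"
proof (induction k)
  case 0
  have "pos_part n (\<lambda>i. 0) = 0" by (rule poly_mapping_eqI) (simp add: lookup_pos_part)
  then show ?case by simp
next
  case (Suc k)
  have "nat ((1 + int k) * w i) = nat (int k * w i) + nat (w i)" for i
  proof (cases "w i \<ge> 0")
    case True
    then show ?thesis by (simp add: distrib_right nat_add_distrib)
  next
    case False
    then have "int k * w i \<le> 0" "(1 + int k) * w i \<le> 0" by (simp_all add: mult_nonneg_nonpos)
    then show ?thesis using False by simp
  qed
  then have "pos_part n (\<lambda>i. int (Suc k) * w i) = pos_part n (\<lambda>i. int k * w i) + pos_part n w"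
    by (intro poly_mapping_eqI) (simp add: lookup_pos_part lookup_add)
  then have "(X (pos_part n (\<lambda>i. int (Suc k) * w i)) :: 'a mpoly) =
      X (pos_part n (\<lambda>i. int k * w i)) * X (pos_part n w)"
    by (simp only: mult_single mult_1)
  then show ?case by (simp only: Suc.IH power_Suc mult.commute)
qed

text \<open>If the exponent difference of a binomial is k w, the binomial is
  x^c (x^(k w+) - x^(k w-)), and x^(w+) - x^(w-) divides the second factor.\<close>

lemma binomial_in_ideal_gen_lattice_binomial_nat:
  assumes e: "in_vars n e" "in_vars n e'" and k: "exp_diff e e' = (\<lambda>i. int k * w i)"
  shows "(X e - X e' :: 'a::field mpoly) \<in> ideal_gen n {lattice_binomial n w}"
proof -
  define c where "c = pos_part n (\<lambda>i. min (int (Poly_Mapping.lookup e i)) (int (Poly_Mapping.lookup e' i)))"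
  have d: "int (Poly_Mapping.lookup e i) - int (Poly_Mapping.lookup e' i) = int k * w i" for i
    using fun_cong[OF k, of i] by (simp add: exp_diff_def)
  have aux: "nat (min x y) + nat (x - y) = nat x" "nat (min x y) + nat (- (x - y)) = nat y"
    if "x \<ge> 0" "y \<ge> 0" for x y :: int
    using that by (auto simp: min_def nat_add_distrib[symmetric])
  have e_eq: "e = c + pos_part n (\<lambda>i. int k * w i)" and e'_eq: "e' = c + pos_part n (\<lambda>i. int k * (- w) i)"
    using aux[OF of_nat_0_le_iff of_nat_0_le_iff] in_vars_lookup[OF e(1)] in_vars_lookup[OF e(2)]
    by (auto intro!: poly_mapping_eqI simp: c_def lookup_add lookup_pos_part simp flip: d)
  let ?x = "X (pos_part n w) :: 'a mpoly" and ?y = "X (pos_part n (- w)) :: 'a mpoly"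
  have "(X e - X e' :: 'a mpoly) = X c * (?x ^ k - ?y ^ k)"
    by (simp add: e_eq e'_eq X_pos_part_mult[symmetric] mult_single right_diff_distrib)
  also have "\<dots> = (X c * (\<Sum>i<k. ?y ^ (k - Suc i) * ?x ^ i)) * (?x - ?y)"
    by (simp add: power_diff_sumr2 mult_ac)
  also have "\<dots> \<in> ideal_gen n {?x - ?y}"
    by (rule ideal_gen_mult)
       (auto intro!: polyring_mult polyring_sum polyring_power polyring_single in_vars_pos_part simp: c_def)
  finally show ?thesis .
qed

lemma binomial_in_ideal_gen_lattice_binomial:
  assumes e: "in_vars n e" "in_vars n e'" and k: "exp_diff e e' = (\<lambda>i. k * w i)"
  shows "(X e - X e' :: 'a::field mpoly) \<in> ideal_gen n {lattice_binomial n w}"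
proof (cases "k \<ge> 0")
  case True
  then obtain j where "k = int j" by (metis nonneg_int_cases)
  then show ?thesis using binomial_in_ideal_gen_lattice_binomial_nat[OF e, of j w] k by simp
next
  case False
  then obtain j where j: "k = - int j" by (metis nonpos_int_cases not_le order_less_imp_le)
  have "exp_diff e' e = (\<lambda>i. int j * w i)"
  proof
    fix i
    have "exp_diff e e' i = - (int j * w i)" using k j by simp
    then show "exp_diff e' e i = int j * w i" by (simp add: exp_diff_def)
  qed
  from ideal_gen_uminus[OF binomial_in_ideal_gen_lattice_binomial_nat[OF e(2) e(1) this]]
  show ?thesis by simp
qed

lemma toric_ideal_of_cyclic_lattice:
  assumes w: "w \<in> kerZ n m a" and gen: "\<forall>v\<in>kerZ n m a. \<exists>k. v = (\<lambda>i. k * w i)"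
  shows "(toric_ideal n m a :: 'a::field mpoly set) = ideal_gen n {lattice_binomial n w}"
proof
  have "(lattice_binomial n w :: 'a mpoly) \<in> toric_ideal n m a"
    using w by (simp add: lattice_binomial_in_toric_ideal_iff kerZ_def)
  then show "ideal_gen n {lattice_binomial n w} \<subseteq> (toric_ideal n m a :: 'a mpoly set)"
    by (simp add: ideal_gen_least is_ideal_toric_ideal)
next
  show "(toric_ideal n m a :: 'a mpoly set) \<subseteq> ideal_gen n {lattice_binomial n w}"
  proof
    fix p :: "'a mpoly" assume p: "p \<in> toric_ideal n m a"
    have "fiber_binomials (Adeg n m a) (Poly_Mapping.keys p) \<subseteq> ideal_gen n {lattice_binomial n w :: 'a mpoly}"
    proof
      fix b :: "'a mpoly" assume "b \<in> fiber_binomials (Adeg n m a) (Poly_Mapping.keys p)"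
      then obtain e e' where b: "b = X e - X e'" "e \<in> Poly_Mapping.keys p" "e' \<in> Poly_Mapping.keys p"
          "Adeg n m a e = Adeg n m a e'"
        unfolding fiber_binomials_def by blast
      have "p \<in> polyring n" using p toric_ideal_subset_polyring by blast
      then have e: "in_vars n e" "in_vars n e'" using b(2,3) by (auto simp: polyring_iff)
      then obtain k where "exp_diff e e' = (\<lambda>i. k * w i)"
        using gen b(4) by (auto simp: Adeg_eq_iff_exp_diff)
      then show "b \<in> ideal_gen n {lattice_binomial n w}"
        using binomial_in_ideal_gen_lattice_binomial[OF e, of k w] b(1) by simp
    qed
    then show "p \<in> ideal_gen n {lattice_binomial n w}"
      using toric_ideal_in_ideal_gen_fiber_binomials[OF p] ideal_gen_least[OF _ is_ideal_ideal_gen] by blast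
  qed
qed

lemma parallel_eq_0_if_coord_eq_0:
  assumes "\<forall>i\<ge>n. v i = 0" "parallel n v w" "i0 < n" "w i0 \<noteq> 0" "v i0 = 0"
  shows "v = 0"
proof
  fix i
  show "v i = 0 i"
  proof (cases "i < n")
    case True
    then have "v i * w i0 = v i0 * w i" using assms(2,3) by (simp add: parallel_def)
    then show ?thesis using assms(4,5) by simp
  qed (use assms(1) in simp)
qed

lemma kerZ_cyclic_if_parallel:
  assumes par: "\<forall>u\<in>kerZ n m a. \<forall>v\<in>kerZ n m a. parallel n u v"
  obtains w where "w \<in> kerZ n m a" "\<forall>v\<in>kerZ n m a. \<exists>k. v = (\<lambda>i. k * w i)"
proof (cases "kerZ n m a \<subseteq> {0}")
  case True
  moreover have "0 \<in> kerZ n m a" by (simp add: kerZ_def)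
  ultimately show ?thesis using that[of 0] by (auto simp: fun_eq_iff zero_fun_def)
next
  case False
  then obtain v0 where v0: "v0 \<in> kerZ n m a" "v0 \<noteq> 0" by blast
  then obtain i0 where i0: "i0 < n" "v0 i0 \<noteq> 0"
    by (auto simp: kerZ_def fun_eq_iff) (metis not_le)
  have vanish: "v = 0" if "v \<in> kerZ n m a" "v i0 = 0" for v
    using parallel_eq_0_if_coord_eq_0[of n v v0 i0] that par v0(1) i0 by (simp add: kerZ_def)
  define P where "P g \<longleftrightarrow> g > 0 \<and> (\<exists>v\<in>kerZ n m a. v i0 = int g)" for g
  have "(\<lambda>i. sgn (v0 i0) * v0 i + 0 * v0 i) \<in> kerZ n m a" using kerZ_lincomb[OF v0(1) v0(1)] .
  then have "P (nat \<bar>v0 i0\<bar>)"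
    using i0(2) unfolding P_def by (intro conjI bexI) (auto simp: sgn_if)
  then have "P (LEAST g. P g)" by (rule LeastI)
  then obtain g w where g: "g = (LEAST g. P g)" "g > 0" and w: "w \<in> kerZ n m a" "w i0 = int g"
    unfolding P_def by blast
  have "\<exists>k. v = (\<lambda>i. k * w i)" if v: "v \<in> kerZ n m a" for v
  proof -
    define k where "k = v i0 div int g"
    define v' where "v' = (\<lambda>i. 1 * v i + (- k) * w i)"
    have v': "v' \<in> kerZ n m a" unfolding v'_def using kerZ_lincomb[OF v w(1)] .
    have v'_i0: "v' i0 = v i0 mod int g" by (simp add: v'_def k_def w(2) minus_div_mult_eq_mod)
    have "v' i0 = 0"
    proof (rule ccontr)
      assume "v' i0 \<noteq> 0"
      moreover have "0 \<le> v' i0" "v' i0 < int g" using v'_i0 g(2) by simp_all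
      ultimately have "P (nat (v' i0))" using v' unfolding P_def by auto
      then have "g \<le> nat (v' i0)" unfolding g(1) by (rule Least_le)
      with \<open>0 \<le> v' i0\<close> \<open>v' i0 < int g\<close> show False by (simp add: le_nat_iff)
    qed
    then have "v' = 0" using vanish[OF v'] by simp
    then show ?thesis by (auto simp: fun_eq_iff v'_def)
  qed
  with w(1) that show ?thesis by blast
qed

section \<open>Toric subideals of a height two toric ideal\<close>

text \<open>Two non-parallel vectors of L' span L over the rationals, so by saturation of L' they
  would force L \<subseteq> L'.\<close>

lemma proper_toric_subideal_parallel:
  assumes dim: "dimQ (kerQ n m a) = 2"
    and sub: "(toric_ideal n m' a' :: 'a::field mpoly set) \<subseteq> toric_ideal n m a"
    and ne: "(toric_ideal n m' a' :: 'a mpoly set) \<noteq> toric_ideal n m a"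
    and uv: "u \<in> kerZ n m' a'" "v \<in> kerZ n m' a'"
  shows "parallel n u v"
proof (rule ccontr)
  assume not_par: "\<not> parallel n u v"
  have ker_sub: "kerZ n m' a' \<subseteq> kerZ n m a"
    using sub by (simp add: toric_ideal_subset_iff)
  have "kerZ n m a \<subseteq> kerZ n m' a'"
  proof
    fix z assume z: "z \<in> kerZ n m a"
    obtain N c d where N: "N \<noteq> 0" "\<And>i. N * z i = c * u i + d * v i"
      using kerZ_rank_two[OF dim _ _ not_par z] uv ker_sub by blast
    have "(\<lambda>i. N * z i) \<in> kerZ n m' a'"
      using kerZ_lincomb[OF uv, of c d] by (simp add: N(2))
    then show "z \<in> kerZ n m' a'" using N(1) by (rule kerZ_cancel)
  qed
  then have "(toric_ideal n m a :: 'a mpoly set) \<subseteq> toric_ideal n m' a'"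
    by (simp add: toric_ideal_subset_iff)
  with sub ne show False by blast
qed

lemma proper_toric_subideal_principal:
  assumes dim: "dimQ (kerQ n m a) = 2"
    and J: "is_toric_ideal n J" "J \<subseteq> (toric_ideal n m a :: 'a::field mpoly set)" "J \<noteq> toric_ideal n m a"
  obtains b where "binomial b" "J = ideal_gen n {b}"
proof -
  obtain m' a' where J_eq: "J = toric_ideal n m' a'" using J(1) unfolding is_toric_ideal_def by blast
  obtain w where w: "w \<in> kerZ n m' a'" "\<forall>v\<in>kerZ n m' a'. \<exists>k. v = (\<lambda>i. k * w i)"
    using kerZ_cyclic_if_parallel proper_toric_subideal_parallel[OF dim] J J_eq by metis
  then have "J = ideal_gen n {lattice_binomial n w}"
    unfolding J_eq by (rule toric_ideal_of_cyclic_lattice)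
  then show ?thesis using that by (auto simp: binomial_def)
qed

text \<open>Column p * n + q (p, q < n) of the configuration below has the entries
  [i = p] w_q - [i = q] w_p, so that it pairs z with the 2 x 2 minor z_p w_q - z_q w_p.
  Its lattice thus consists of the vectors parallel to w, and its toric ideal is the ideal of
  the saturation of the line spanned by w.\<close>

definition minor_config :: "nat \<Rightarrow> (nat \<Rightarrow> int) \<Rightarrow> nat \<Rightarrow> nat \<Rightarrow> int" where
  "minor_config n w i j =
     (if i = j div n then w (j mod n) else 0) - (if i = j mod n then w (j div n) else 0)"

definition line_ideal :: "nat \<Rightarrow> (nat \<Rightarrow> int) \<Rightarrow> 'a::field mpoly set" where
  "line_ideal n w = toric_ideal n (n * n) (minor_config n w)"

lemma sum_minor_config:
  assumes "j < n * n"
  shows "(\<Sum>i<n. z i * minor_config n w i j) = z (j div n) * w (j mod n) - z (j mod n) * w (j div n)"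
proof -
  have "n > 0" using assms by (cases n) auto
  then have lt: "j div n < n" "j mod n < n" using assms by (auto simp: div_less_iff_less_mult mult.commute)
  have delta: "(\<Sum>i<n. z i * (if i = p then c else 0)) = (if p < n then z p * c else 0)" for p c
    by (simp add: if_distrib sum.delta cong: if_cong)
  show ?thesis
    unfolding minor_config_def right_diff_distrib sum_subtractf using lt by (simp only: delta) simp
qed

lemma kerZ_minor_config: "kerZ n (n * n) (minor_config n w) = {z. (\<forall>i\<ge>n. z i = 0) \<and> parallel n z w}"
proof -
  have "(\<forall>j<n * n. (\<Sum>i<n. z i * minor_config n w i j) = 0) \<longleftrightarrow> parallel n z w" for z
  proof
    assume minors: "\<forall>j<n * n. (\<Sum>i<n. z i * minor_config n w i j) = 0"
    show "parallel n z w" unfolding parallel_def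
    proof (intro allI impI)
      fix p q assume pq: "p < n" "q < n"
      have "p * n + q < n * n"
        using pq mult_le_mono1[of "Suc p" n n] by (simp add: mult.commute)
      moreover have "(p * n + q) div n = p" "(p * n + q) mod n = q" using pq by auto
      ultimately show "z p * w q = z q * w p"
        using minors sum_minor_config[of "p * n + q" n z w] by simp
    qed
  next
    assume "parallel n z w"
    moreover have "j div n < n \<and> j mod n < n" if "j < n * n" for j
    proof -
      have "n > 0" using that by (cases n) auto
      then show ?thesis using that by (auto simp: div_less_iff_less_mult mult.commute)
    qed
    ultimately show "\<forall>j<n * n. (\<Sum>i<n. z i * minor_config n w i j) = 0"
      by (simp add: sum_minor_config parallel_def)
  qed
  then show ?thesis by (auto simp: kerZ_def)
qed

lemma line_ideal_subset:
  assumes w: "w \<in> kerZ n m a" "w \<noteq> 0"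
  shows "(line_ideal n w :: 'a::field mpoly set) \<subseteq> toric_ideal n m a"
  unfolding line_ideal_def toric_ideal_subset_iff kerZ_minor_config
proof safe
  fix z assume z: "\<forall>i\<ge>n. z i = 0" "parallel n z w"
  obtain q0 where q0: "q0 < n" "w q0 \<noteq> 0"
    using w by (auto simp: kerZ_def fun_eq_iff) (metis not_le)
  have "w q0 * (\<Sum>i<n. z i * a i j) = 0" if "j < m" for j
  proof -
    have "w q0 * (\<Sum>i<n. z i * a i j) = (\<Sum>i<n. (z i * w q0) * a i j)"
      by (simp add: sum_distrib_left algebra_simps)
    also have "\<dots> = z q0 * (\<Sum>i<n. w i * a i j)"
      using z(2) q0 by (simp add: sum_distrib_left algebra_simps parallel_def)
    also have "\<dots> = 0" using w that by (simp add: kerZ_def)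
    finally show ?thesis .
  qed
  then show "z \<in> kerZ n m a" using z(1) q0(2) by (simp add: kerZ_def)
qed

lemma line_ideal_proper:
  assumes dim: "dimQ (kerQ n m a) = 2" and w: "\<forall>i\<ge>n. w i = 0" "w \<noteq> 0"
  shows "(line_ideal n w :: 'a::field mpoly set) \<noteq> toric_ideal n m a"
proof
  assume "(line_ideal n w :: 'a mpoly set) = toric_ideal n m a"
  then have "kerZ n m a \<subseteq> kerZ n (n * n) (minor_config n w)"
    using toric_ideal_subset_iff[where 'a='a] unfolding line_ideal_def by blast
  moreover obtain z where "z \<in> kerZ n m a" "\<not> parallel n z w"
    using kerZ_not_parallel[OF dim w] .
  ultimately show False by (auto simp: kerZ_minor_config)
qed

lemma binomial_in_proper_toric_subideal:
  assumes dim: "dimQ (kerQ n m a) = 2"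
    and b: "binomial b" "b \<in> (toric_ideal n m a :: 'a::field mpoly set)"
  obtains J where "is_toric_ideal n J" "b \<in> J" "J \<subseteq> toric_ideal n m a" "J \<noteq> toric_ideal n m a"
proof -
  obtain u v where uv: "b = X u - X v" using b(1) unfolding binomial_def by blast
  obtain w where w: "w \<in> kerZ n m a" "w \<noteq> 0" "u \<noteq> v \<Longrightarrow> w = exp_diff u v"
  proof (cases "u = v")
    case True
    then show ?thesis using kerZ_nonzero[OF dim] that by blast
  next
    case False
    then have "in_vars n u" "in_vars n v" "exp_diff u v \<in> kerZ n m a"
      using b(2) by (auto simp: uv binomial_in_toric_ideal_iff Adeg_eq_iff_exp_diff)
    then show ?thesis using that False by (simp add: exp_diff_eq_0_iff)
  qed
  have "b \<in> line_ideal n w"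
  proof (cases "u = v")
    case True
    then show ?thesis by (simp add: uv line_ideal_def is_idealD(1)[OF is_ideal_toric_ideal])
  next
    case False
    then have "in_vars n u" "in_vars n v"
      using b(2) by (auto simp: uv binomial_in_toric_ideal_iff)
    then show ?thesis using False w(3)
      by (simp add: uv line_ideal_def binomial_in_toric_ideal_iff Adeg_eq_iff_exp_diff
          kerZ_minor_config parallel_def exp_diff_def in_vars_lookup)
  qed
  moreover have "is_toric_ideal n (line_ideal n w :: 'a mpoly set)"
    unfolding line_ideal_def is_toric_ideal_def by blast
  moreover have "\<forall>i\<ge>n. w i = 0" using w(1) by (simp add: kerZ_def)
  ultimately show ?thesis
    using that line_ideal_subset[OF w(1,2)] line_ideal_proper[OF dim _ w(2)] by blast
qed

lemma proper_toric_family_principal: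
  assumes dim: "dimQ (kerQ n m a) = 2"
    and J: "\<forall>i<s. is_toric_ideal n (J i) \<and> J i \<noteq> toric_ideal n m a \<and>
      J i \<subseteq> (toric_ideal n m a :: 'a::field mpoly set)"
  obtains \<beta> where "\<forall>i<s. binomial (\<beta> i) \<and> \<beta> i \<in> toric_ideal n m a"
    "ideal_sum s J = ideal_gen n (\<beta> ` {..<s})"
proof -
  have "\<forall>i\<in>{..<s}. \<exists>b. binomial b \<and> J i = ideal_gen n {b}"
    using proper_toric_subideal_principal[OF dim] J by (metis lessThan_iff)
  then obtain \<beta> where \<beta>: "\<forall>i\<in>{..<s}. binomial (\<beta> i) \<and> J i = ideal_gen n {\<beta> i}"
    by (rule bchoice[elim_format]) blast
  have "\<forall>i<s. \<beta> i \<in> toric_ideal n m a"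
    using \<beta> J ideal_gen_base by blast
  moreover have "ideal_sum s J = ideal_gen n (\<beta> ` {..<s})"
    using \<beta> by (intro ideal_sum_principal) simp
  ultimately show ?thesis using that \<beta> by blast
qed

lemma binomial_family_in_proper_toric_family:
  assumes dim: "dimQ (kerQ n m a) = 2"
    and B: "\<forall>i<t. binomial (B i) \<and> B i \<in> (toric_ideal n m a :: 'a::field mpoly set)"
  obtains J where "\<forall>i<t. is_toric_ideal n (J i) \<and> J i \<noteq> toric_ideal n m a"
    "ideal_gen n (B ` {..<t}) \<subseteq> ideal_sum t J" "ideal_sum t J \<subseteq> toric_ideal n m a"
proof -
  have "\<forall>i\<in>{..<t}. \<exists>J.
      is_toric_ideal n J \<and> B i \<in> J \<and> J \<subseteq> toric_ideal n m a \<and> J \<noteq> toric_ideal n m a"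
    using binomial_in_proper_toric_subideal[OF dim] B by (metis lessThan_iff)
  then obtain J where J: "\<forall>i\<in>{..<t}. is_toric_ideal n (J i) \<and> B i \<in> J i \<and>
      J i \<subseteq> toric_ideal n m a \<and> J i \<noteq> toric_ideal n m a"
    by (rule bchoice[elim_format]) blast
  have ideals: "\<forall>i<t. is_ideal n (J i)" using J by (auto intro: is_ideal_if_toric)
  have "ideal_sum t J \<subseteq> toric_ideal n m a"
    using J by (intro ideal_sum_least[OF _ is_ideal_toric_ideal]) auto
  moreover have "ideal_gen n (B ` {..<t}) \<subseteq> ideal_sum t J"
  proof (rule ideal_gen_least[OF _ is_ideal_ideal_sum[OF ideals]])
    show "B ` {..<t} \<subseteq> ideal_sum t J"
      using J ideal_sum_upper[of t J] ideals is_idealD(1) by fastforce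
  qed
  ultimately show ?thesis using that J by blast
qed

section \<open>Minimal generators can be chosen among binomials\<close>

lemma (in vector_space) card_le_if_independent_modulo:
  assumes S: "finite S" and B: "finite B" and M: "subspace M"
    and congr: "\<forall>b\<in>B. \<exists>y\<in>span S. b - y \<in> M"
    and indep: "\<forall>c. (\<Sum>b\<in>B. scale (c b) b) \<in> M \<longrightarrow> (\<forall>b\<in>B. c b = 0)"
  shows "card B \<le> card S"
proof -
  have "\<forall>b\<in>B. \<exists>y. y \<in> span S \<and> b - y \<in> M" using congr by blast
  then obtain f where f: "\<forall>b\<in>B. f b \<in> span S \<and> b - f b \<in> M"
    by (rule bchoice[elim_format]) blast
  have f_indep: "\<forall>b\<in>B. c b = 0" if "(\<Sum>b\<in>B. scale (c b) (f b)) = 0" for c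
  proof -
    have "(\<Sum>b\<in>B. scale (c b) b) = (\<Sum>b\<in>B. scale (c b) (b - f b)) + (\<Sum>b\<in>B. scale (c b) (f b))"
      by (simp add: scale_right_diff_distrib sum_subtractf)
    also have "\<dots> \<in> M"
      using that f by (simp add: subspace_sum[OF M] subspace_scale[OF M])
    finally show ?thesis using indep by blast
  qed
  have "inj_on f B"
  proof
    fix b1 b2 assume b: "b1 \<in> B" "b2 \<in> B" "f b1 = f b2"
    define c :: "'b \<Rightarrow> 'a" where "c x = (if x = b1 then 1 else 0) - (if x = b2 then 1 else 0)" for x
    have "scale (c x) (f x) = (if x = b1 then f x else 0) - (if x = b2 then f x else 0)" for x
      by (simp add: c_def scale_left_diff_distrib)
    then have "(\<Sum>x\<in>B. scale (c x) (f x)) = f b1 - f b2"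
      using b(1,2) B by (simp add: sum_subtractf)
    then have "c b1 = 0" using f_indep b by simp
    then show "b1 = b2" by (auto simp: c_def split: if_splits)
  qed
  have "independent (f ` B)"
  proof (rule independent_if_scalars_zero)
    show "finite (f ` B)" using B by simp
  next
    fix c x assume "(\<Sum>y\<in>f ` B. scale (c y) y) = 0" "x \<in> f ` B"
    then show "c x = 0"
      using f_indep[of "c \<circ> f"] \<open>inj_on f B\<close> by (auto simp: sum.reindex)
  qed
  then have "card (f ` B) \<le> card S"
    using independent_span_bound[OF S] f by blast
  with \<open>inj_on f B\<close> show ?thesis by (simp add: card_image)
qed

interpretation mv: vector_space "\<lambda>c (p::'a::field mpoly). cpoly c * p"
  by unfold_locales (simp_all add: distrib_left single_add distrib_right mult_single mult.assoc[symmetric])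

lemma lookup_cpoly_mult: "Poly_Mapping.lookup (cpoly c * p :: 'a::field mpoly) e = c * Poly_Mapping.lookup p e"
  by (simp add: mult_map_scale_conv_mult[symmetric] map.rep_eq when_def)

lemma lookup_mult_0_eq_0:
  assumes "Poly_Mapping.lookup q 0 = 0"
  shows "Poly_Mapping.lookup (q * r :: 'a::field mpoly) 0 = 0"
proof -
  have "0 \<notin> Poly_Mapping.keys (q * r)"
  proof
    assume "0 \<in> Poly_Mapping.keys (q * r)"
    then obtain e f where ef: "0 = e + f" "e \<in> Poly_Mapping.keys q"
      using keys_mult[of q r] by blast
    have "Poly_Mapping.lookup e i = 0" for i
      using arg_cong[OF ef(1), of "\<lambda>x. Poly_Mapping.lookup x i"] by (simp add: lookup_add)
    then have "e = 0" by (simp add: poly_mapping_eqI)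
    with ef(2) assms show False by (simp add: in_keys_iff)
  qed
  then show ?thesis by (simp add: in_keys_iff)
qed

definition max_ideal_span :: "nat \<Rightarrow> 'a::field mpoly set \<Rightarrow> 'a mpoly set" where
  "max_ideal_span n G = {f. \<exists>p. (\<forall>g\<in>G. p g \<in> polyring n \<and> Poly_Mapping.lookup (p g) 0 = 0) \<and>
     f = (\<Sum>g\<in>G. p g * g)}"

lemma subspace_max_ideal_span: "mv.subspace (max_ideal_span n G)"
  unfolding mv.subspace_def
proof (intro conjI ballI allI)
  show "0 \<in> max_ideal_span n G"
    unfolding max_ideal_span_def by (intro CollectI exI[of _ "\<lambda>_. 0"]) simp
next
  fix x y :: "'a mpoly" assume "x \<in> max_ideal_span n G" "y \<in> max_ideal_span n G"
  then obtain p q where p: "\<forall>g\<in>G. p g \<in> polyring n \<and> Poly_Mapping.lookup (p g) 0 = 0" "x = (\<Sum>g\<in>G. p g * g)"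
    and q: "\<forall>g\<in>G. q g \<in> polyring n \<and> Poly_Mapping.lookup (q g) 0 = 0" "y = (\<Sum>g\<in>G. q g * g)"
    unfolding max_ideal_span_def by blast
  show "x + y \<in> max_ideal_span n G" unfolding max_ideal_span_def
    using p q by (intro CollectI exI[of _ "\<lambda>g. p g + q g"])
      (auto simp: sum.distrib distrib_right lookup_add intro: polyring_add)
next
  fix c and x :: "'a mpoly" assume "x \<in> max_ideal_span n G"
  then obtain p where p: "\<forall>g\<in>G. p g \<in> polyring n \<and> Poly_Mapping.lookup (p g) 0 = 0" "x = (\<Sum>g\<in>G. p g * g)"
    unfolding max_ideal_span_def by blast
  show "cpoly c * x \<in> max_ideal_span n G" unfolding max_ideal_span_def
    using p by (intro CollectI exI[of _ "\<lambda>g. cpoly c * p g"])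
      (auto simp: sum_distrib_left mult.assoc lookup_cpoly_mult intro: polyring_mult polyring_cpoly)
qed

lemma mult_in_max_ideal_span:
  assumes "finite G" "q \<in> polyring n" "Poly_Mapping.lookup q 0 = 0" "f \<in> ideal_gen n G"
  shows "q * f \<in> max_ideal_span n G"
  using assms(4)
proof (induction f rule: ideal_gen_induct)
  case zero
  then show ?case using mv.subspace_0[OF subspace_max_ideal_span] by simp
next
  case (step r g f)
  have "(\<Sum>g'\<in>G. (if g' = g then q * r else 0) * g') = (\<Sum>g'\<in>G. if g' = g then q * r * g' else 0)"
    by (rule sum.cong) auto
  also have "\<dots> = q * r * g" using assms(1) step(2) by simp
  finally have "(\<Sum>g'\<in>G. (if g' = g then q * r else 0) * g') = q * r * g" .
  then have "q * r * g \<in> max_ideal_span n G"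
    unfolding max_ideal_span_def using step(1) assms(2,3)
    by (intro CollectI exI[of _ "\<lambda>g'. if g' = g then q * r else 0"])
       (auto simp: lookup_mult_0_eq_0 intro: polyring_mult)
  moreover have "q * (r * g + f) = q * r * g + q * f" by (simp add: algebra_simps)
  ultimately show ?case using step mv.subspace_add[OF subspace_max_ideal_span] by auto
qed

lemma ideal_gen_congruent_span:
  assumes "finite G" "S \<subseteq> ideal_gen n G" "b \<in> ideal_gen n S"
  shows "\<exists>y\<in>mv.span S. b - y \<in> max_ideal_span n G"
  using assms(3)
proof (induction b rule: ideal_gen_induct)
  case zero
  show ?case using mv.span_zero mv.subspace_0[OF subspace_max_ideal_span] by force
next
  case (step r s f)
  then obtain y where y: "y \<in> mv.span S" "f - y \<in> max_ideal_span n G" by blast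
  let ?c = "cpoly (Poly_Mapping.lookup r 0) :: 'a mpoly"
  have "?c * s + y \<in> mv.span S"
    by (rule mv.span_add[OF mv.span_scale[OF mv.span_base[OF step(2)]] y(1)])
  moreover have "(r - ?c) * s \<in> max_ideal_span n G"
    using step(1,2) assms(1,2)
    by (intro mult_in_max_ideal_span) (auto simp: lookup_minus intro: polyring_diff polyring_cpoly)
  then have "(r - ?c) * s + (f - y) \<in> max_ideal_span n G"
    using y(2) by (rule mv.subspace_add[OF subspace_max_ideal_span])
  moreover have "r * s + f - (?c * s + y) = (r - ?c) * s + (f - y)" by (simp add: algebra_simps)
  ultimately show ?case by metis
qed

lemma pointed_Adeg_eq_0:
  assumes "pointed_config n m a" "in_vars n e" "Adeg n m a e = 0"
  shows "e = 0"
proof -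
  have "\<forall>j<m. (\<Sum>i<n. int (Poly_Mapping.lookup e i) * a i j) = 0"
    using assms(3) by (auto simp: Adeg_def fun_eq_iff split: if_splits)
  then have "\<forall>i. Poly_Mapping.lookup e i = 0"
    using assms(1) in_vars_lookup[OF assms(2)] unfolding pointed_config_def by blast
  then show ?thesis by (simp add: poly_mapping_eqI)
qed

lemma hom_part_0_eq_0:
  assumes "pointed_config n m a" "p \<in> polyring n" "Poly_Mapping.lookup p 0 = 0"
  shows "hom_part (Adeg n m a) 0 p = 0"
proof (rule poly_mapping_eqI)
  fix e
  have "Poly_Mapping.lookup p e = 0" if "Adeg n m a e = 0"
  proof (cases "e \<in> Poly_Mapping.keys p")
    case True
    then have "e = 0" using pointed_Adeg_eq_0[OF assms(1) _ that] assms(2) by (simp add: polyring_iff)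
    then show ?thesis using assms(3) by simp
  qed (simp add: in_keys_iff)
  then show "Poly_Mapping.lookup (hom_part (Adeg n m a) 0 p) e = Poly_Mapping.lookup 0 e"
    by (simp add: lookup_hom_part)
qed

lemma hom_part_mult_binomial:
  assumes "Adeg n m a e = Adeg n m a e'"
  shows "hom_part (Adeg n m a) d (p * (X e - X e') :: 'a::field mpoly) =
    hom_part (Adeg n m a) (d - Adeg n m a e) p * (X e - X e')"
  using assms hom_part_single_mult[where D = "Adeg n m a", OF Adeg_add, where b = d and x = 1 and p = p]
  by (simp add: right_diff_distrib left_diff_distrib hom_part_diff mult.commute)

lemma toric_binomialE:
  assumes "binomial g" "g \<in> (toric_ideal n m a :: 'a::field mpoly set)"
  obtains e e' where "g = X e - X e'" "Adeg n m a e = Adeg n m a e'"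
  using assms by (auto simp: binomial_def binomial_in_toric_ideal_iff)

lemma hom_part_mult_toric_binomial:
  assumes "q \<in> polyring n" "binomial g" "g \<in> (toric_ideal n m a :: 'a::field mpoly set)" "g \<in> S"
  shows "hom_part (Adeg n m a) d (q * g) \<in> ideal_gen n S"
proof -
  obtain e e' where "g = X e - X e'" "Adeg n m a e = Adeg n m a e'"
    using assms(2,3) by (rule toric_binomialE)
  then have "hom_part (Adeg n m a) d (q * g) = hom_part (Adeg n m a) (d - Adeg n m a e) q * g"
    by (simp add: hom_part_mult_binomial)
  then show ?thesis using assms(1,4) by (simp add: ideal_gen_mult hom_part_polyring)
qed

text \<open>The heart of the graded Nakayama lemma: the degree d part, d the degree of b0, of a
  relation modulo m G has no contribution from the m-multiple of b0, because m has no
  elements of degree 0.\<close>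

lemma redundant_if_dependent_modulo_max_ideal:
  assumes pointed: "pointed_config n m a"
    and G: "finite G" "\<forall>g\<in>G. binomial g \<and> g \<in> (toric_ideal n m a :: 'a::field mpoly set)"
    and b0: "b0 \<in> G"
    and c: "(\<Sum>b\<in>G. cpoly (c b) * b) \<in> max_ideal_span n G" "c b0 \<noteq> 0"
  shows "b0 \<in> ideal_gen n (G - {b0})"
proof -
  let ?D = "Adeg n m a" and ?I = "ideal_gen n (G - {b0})"
  obtain p where p: "\<forall>g\<in>G. p g \<in> polyring n \<and> Poly_Mapping.lookup (p g) 0 = 0"
    "(\<Sum>b\<in>G. cpoly (c b) * b) = (\<Sum>g\<in>G. p g * g)"
    using c(1) unfolding max_ideal_span_def by blast
  have "binomial b0" "b0 \<in> toric_ideal n m a" using G(2) b0 by auto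
  then obtain u v where uv: "b0 = X u - X v" "?D u = ?D v" by (rule toric_binomialE)
  define d where "d = ?D u"
  have others: "hom_part ?D d (q * g) \<in> ?I" if "q \<in> polyring n" "g \<in> G - {b0}" for q g
    using that G(2) by (intro hom_part_mult_toric_binomial) auto
  have "hom_part ?D d (p b0 * b0) = hom_part ?D 0 (p b0) * b0"
    using uv by (simp add: hom_part_mult_binomial d_def)
  then have b0_rhs: "hom_part ?D d (p b0 * b0) = 0"
    using hom_part_0_eq_0[OF pointed, of "p b0"] p(1) b0 by simp
  have "hom_part ?D d (cpoly (c b0) * b0) = hom_part ?D 0 (cpoly (c b0)) * b0"
    using uv by (simp add: hom_part_mult_binomial d_def)
  then have b0_lhs: "hom_part ?D d (cpoly (c b0) * b0) = cpoly (c b0) * b0"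
    by (simp add: hom_part_single)
  have split: "(\<Sum>g\<in>G. f g) = f b0 + (\<Sum>g\<in>G - {b0}. f g)" for f :: "'a mpoly \<Rightarrow> 'a mpoly"
    using G(1) b0 by (simp add: sum.remove)
  have "cpoly (c b0) * b0 + (\<Sum>b\<in>G - {b0}. hom_part ?D d (cpoly (c b) * b)) =
      (\<Sum>g\<in>G - {b0}. hom_part ?D d (p g * g))"
    using arg_cong[OF p(2), of "hom_part ?D d"]
    by (simp add: hom_part_sum split[of "\<lambda>b. hom_part ?D d (cpoly (c b) * b)"]
        split[of "\<lambda>g. hom_part ?D d (p g * g)"] b0_lhs b0_rhs)
  then have "cpoly (c b0) * b0 = (\<Sum>g\<in>G - {b0}. hom_part ?D d (p g * g)) -
      (\<Sum>b\<in>G - {b0}. hom_part ?D d (cpoly (c b) * b))"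
    by (simp add: eq_diff_eq)
  also have "\<dots> \<in> ?I"
    using p(1) by (intro ideal_gen_diff sum_in_ideal[OF is_ideal_ideal_gen] others polyring_cpoly) auto
  finally have "cpoly (inverse (c b0)) * (cpoly (c b0) * b0) \<in> ?I"
    by (rule is_idealD(3)[OF is_ideal_ideal_gen polyring_cpoly])
  then show ?thesis using c(2) by (simp add: mult.assoc[symmetric] mult_single)
qed

lemma toric_ideal_finite_binomial_generators:
  assumes S: "finite S" "ideal_gen n S = (toric_ideal n m a :: 'a::field mpoly set)"
  obtains G0 :: "'a::field mpoly set" where "finite G0" "\<forall>g\<in>G0. binomial g \<and> g \<in> toric_ideal n m a"
    "ideal_gen n G0 = toric_ideal n m a"
proof -
  let ?T = "toric_ideal n m a :: 'a mpoly set"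
  define G0 where "G0 = (\<Union>s\<in>S. fiber_binomials (Adeg n m a) (Poly_Mapping.keys s) :: 'a mpoly set)"
  have ST: "S \<subseteq> ?T" using S(2) ideal_gen_base by (metis subsetI)
  have G0_bin: "\<forall>g\<in>G0. binomial g \<and> g \<in> ?T"
  proof
    fix g assume "g \<in> G0"
    then obtain s e e' where g: "s \<in> S" "g = X e - X e'" "e \<in> Poly_Mapping.keys s"
        "e' \<in> Poly_Mapping.keys s" "Adeg n m a e = Adeg n m a e'"
      unfolding G0_def fiber_binomials_def by blast
    moreover have "s \<in> polyring n" using g(1) ST toric_ideal_subset_polyring by blast
    ultimately show "binomial g \<and> g \<in> ?T"
      by (auto simp: binomial_def binomial_in_toric_ideal_iff polyring_iff)
  qed
  have "S \<subseteq> ideal_gen n G0"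
  proof
    fix s assume "s \<in> S"
    then have "s \<in> ideal_gen n (fiber_binomials (Adeg n m a) (Poly_Mapping.keys s))"
      using ST toric_ideal_in_ideal_gen_fiber_binomials by blast
    moreover have "fiber_binomials (Adeg n m a) (Poly_Mapping.keys s) \<subseteq> G0"
      unfolding G0_def using \<open>s \<in> S\<close> by blast
    ultimately show "s \<in> ideal_gen n G0" using ideal_gen_mono by blast
  qed
  then have "?T \<subseteq> ideal_gen n G0"
    unfolding S(2)[symmetric] by (rule ideal_gen_least[OF _ is_ideal_ideal_gen])
  moreover have "ideal_gen n G0 \<subseteq> ?T"
    using G0_bin by (intro ideal_gen_least[OF _ is_ideal_toric_ideal]) blast
  ultimately have gen_G0: "ideal_gen n G0 = ?T" by (rule antisym[rotated])
  have "finite G0" unfolding G0_def using S(1) by (simp add: finite_fiber_binomials)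
  from that[OF this G0_bin gen_G0] show ?thesis .
qed

text \<open>Graded Nakayama: an irredundant binomial generating set G is linearly independent
  modulo m G, while each of its elements is congruent modulo m G to a linear combination of
  S; hence card G \<le> card S.\<close>

lemma toric_ideal_binomial_generators:
  assumes pointed: "pointed_config n m a"
    and S: "finite S" "ideal_gen n S = (toric_ideal n m a :: 'a::field mpoly set)"
  obtains t and B :: "nat \<Rightarrow> 'a::field mpoly"
  where "t \<le> card S" "\<forall>i<t. binomial (B i) \<and> B i \<in> toric_ideal n m a"
    "ideal_gen n (B ` {..<t}) = toric_ideal n m a"
proof -
  let ?T = "toric_ideal n m a :: 'a mpoly set"
  obtain G0 where G0: "finite G0" "\<forall>g\<in>G0. binomial g \<and> g \<in> ?T" "ideal_gen n G0 = ?T"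
    using toric_ideal_finite_binomial_generators[OF S] .
  obtain G where G: "G \<subseteq> G0" "ideal_gen n G = ?T"
    and irredundant: "\<forall>b\<in>G. b \<notin> ideal_gen n (G - {b})"
    using irredundant_generating_subset[OF G0(1)] G0(3) by metis
  have fin: "finite G" using G(1) G0(1) finite_subset by blast
  have bin: "\<forall>g\<in>G. binomial g \<and> g \<in> ?T" using G(1) G0(2) by blast
  have "card G \<le> card S"
  proof (rule mv.card_le_if_independent_modulo[OF S(1) fin subspace_max_ideal_span])
    have S_sub: "S \<subseteq> ideal_gen n G" using S(2) G(2) ideal_gen_base by (metis subsetI)
    show "\<forall>b\<in>G. \<exists>y\<in>mv.span S. b - y \<in> max_ideal_span n G"
    proof
      fix b assume "b \<in> G"
      then have "b \<in> ideal_gen n S" using G(2) S(2) ideal_gen_base by metis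
      then show "\<exists>y\<in>mv.span S. b - y \<in> max_ideal_span n G"
        by (rule ideal_gen_congruent_span[OF fin S_sub])
    qed
    show "\<forall>c. (\<Sum>b\<in>G. cpoly (c b) * b) \<in> max_ideal_span n G \<longrightarrow> (\<forall>b\<in>G. c b = 0)"
    proof (intro allI impI ballI)
      fix c b assume c: "(\<Sum>b\<in>G. cpoly (c b) * b) \<in> max_ideal_span n G" and b: "b \<in> G"
      show "c b = 0"
        using redundant_if_dependent_modulo_max_ideal[OF pointed fin bin b c] irredundant b by blast
    qed
  qed
  moreover obtain B where "bij_betw B {..<card G} G"
    using ex_bij_betw_nat_finite[OF fin] atLeast0LessThan by metis
  then have B: "B ` {..<card G} = G" by (simp add: bij_betw_def)
  then have "\<forall>i<card G. binomial (B i) \<and> B i \<in> ?T" using bin by blast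
  ultimately show ?thesis using that[of "card G" B] G(2) B by simp
qed

section \<open>Splittings of height two toric ideals\<close>

lemma Least_eq_if_dominated:
  fixes P Q :: "nat \<Rightarrow> bool"
  assumes PQ: "\<And>k. P k \<Longrightarrow> \<exists>j\<le>k. Q j" and QP: "\<And>k. Q k \<Longrightarrow> \<exists>j\<le>k. P j"
  shows "Least P = Least Q"
proof (cases "\<exists>k. P k")
  case True
  then have "P (Least P)" by (metis LeastI)
  then obtain j where j: "j \<le> Least P" "Q j" using PQ by blast
  from j(2) have "Q (Least Q)" by (rule LeastI)
  then obtain j' where j': "j' \<le> Least Q" "P j'" using QP by blast
  have "Least Q \<le> j" using j(2) by (rule Least_le)
  moreover have "Least P \<le> j'" using j'(2) by (rule Least_le)
  ultimately show ?thesis using j(1) j'(1) by simp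
next
  case False
  then have "P = Q" using QP by (auto simp: fun_eq_iff)
  then show ?thesis by simp
qed

lemma toric_subideal_of_sum:
  assumes "\<forall>j<s. is_toric_ideal n (J j)" "I = ideal_sum s J" "i < s"
  shows "J i \<subseteq> I"
  using ideal_sum_upper[of s J i] assms is_idealD(1)[OF is_ideal_if_toric] by blast

lemma Split_eq_mu:
  assumes pointed: "pointed_config n m a" and dim: "dimQ (kerQ n m a) = 2"
  shows "Split n (toric_ideal n m a :: 'a::field mpoly set) = mu n (toric_ideal n m a :: 'a mpoly set)"
  unfolding Split_def mu_def
proof (rule Least_eq_if_dominated)
  let ?T = "toric_ideal n m a :: 'a mpoly set"
  fix s :: nat assume "\<exists>J. (\<forall>i<s. is_toric_ideal n (J i) \<and> J i \<noteq> ?T) \<and> ?T = ideal_sum s J"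
  then obtain J where J: "\<forall>i<s. is_toric_ideal n (J i) \<and> J i \<noteq> ?T" "?T = ideal_sum s J" by blast
  then have "\<forall>i<s. J i \<subseteq> ?T" using toric_subideal_of_sum by blast
  then obtain \<beta> where \<beta>: "\<forall>i<s. binomial (\<beta> i) \<and> \<beta> i \<in> ?T" "ideal_sum s J = ideal_gen n (\<beta> ` {..<s})"
    using proper_toric_family_principal[OF dim, of s J] J(1) by blast
  have "\<beta> ` {..<s} \<subseteq> polyring n" using \<beta>(1) toric_ideal_subset_polyring by blast
  with \<beta>(2) J(2) card_image_le[of "{..<s}" \<beta>]
  show "\<exists>j\<le>s. \<exists>S. S \<subseteq> polyring n \<and> finite S \<and> card S = j \<and> ideal_gen n S = ?T" by auto
next
  let ?T = "toric_ideal n m a :: 'a mpoly set"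
  fix k :: nat assume "\<exists>S. S \<subseteq> polyring n \<and> finite S \<and> card S = k \<and> ideal_gen n S = ?T"
  then obtain S where S: "finite S" "card S = k" "ideal_gen n S = ?T" by blast
  obtain t B where B: "t \<le> card S" "\<forall>i<t. binomial (B i) \<and> B i \<in> ?T" "ideal_gen n (B ` {..<t}) = ?T"
    using toric_ideal_binomial_generators[OF pointed S(1,3)] by blast
  obtain J where J: "\<forall>i<t. is_toric_ideal n (J i) \<and> J i \<noteq> ?T"
      "ideal_gen n (B ` {..<t}) \<subseteq> ideal_sum t J" "ideal_sum t J \<subseteq> ?T"
    using binomial_family_in_proper_toric_family[OF dim B(2)] by blast
  then have "?T = ideal_sum t J" using B(3) by blast
  with J(1) B(1) S(2)
  show "\<exists>j\<le>k. \<exists>J. (\<forall>i<j. is_toric_ideal n (J i) \<and> J i \<noteq> ?T) \<and> ?T = ideal_sum j J" by blast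
qed

lemma Split_rad_eq_bar:
  assumes dim: "dimQ (kerQ n m a) = 2"
  shows "Split_rad n (toric_ideal n m a :: 'a::field mpoly set) = bar n (toric_ideal n m a :: 'a mpoly set)"
  unfolding Split_rad_def bar_def
proof (rule Least_eq_if_dominated)
  let ?T = "toric_ideal n m a :: 'a mpoly set"
  fix r :: nat assume "\<exists>J. (\<forall>i<r. is_toric_ideal n (J i) \<and> J i \<noteq> ?T) \<and> ?T = radical n (ideal_sum r J)"
  then obtain J where J: "\<forall>i<r. is_toric_ideal n (J i) \<and> J i \<noteq> ?T" "?T = radical n (ideal_sum r J)"
    by blast
  have "\<forall>i<r. J i \<subseteq> polyring n"
    using J(1) toric_ideal_subset_polyring unfolding is_toric_ideal_def by blast
  then have "ideal_sum r J \<subseteq> polyring n" by (rule ideal_sum_least[OF _ is_ideal_polyring])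
  then have "ideal_sum r J \<subseteq> ?T" using J(2) subset_radical by blast
  then have "\<forall>i<r. J i \<subseteq> ?T"
    using toric_subideal_of_sum[of r n J "ideal_sum r J"] J(1) by blast
  then obtain \<beta> where \<beta>: "\<forall>i<r. binomial (\<beta> i) \<and> \<beta> i \<in> ?T" "ideal_sum r J = ideal_gen n (\<beta> ` {..<r})"
    using proper_toric_family_principal[OF dim, of r J] J(1) by blast
  with J(2) show "\<exists>j\<le>r. \<exists>B. (\<forall>i<j. binomial (B i) \<and> B i \<in> ?T) \<and> ?T = radical n (ideal_gen n (B ` {..<j}))"
    by (intro exI[of _ r] conjI exI[of _ \<beta>]) simp_all
next
  let ?T = "toric_ideal n m a :: 'a mpoly set"
  fix t :: nat assume "\<exists>B. (\<forall>i<t. binomial (B i) \<and> B i \<in> ?T) \<and> ?T = radical n (ideal_gen n (B ` {..<t}))"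
  then obtain B where B: "\<forall>i<t. binomial (B i) \<and> B i \<in> ?T" "?T = radical n (ideal_gen n (B ` {..<t}))"
    by blast
  obtain J where J: "\<forall>i<t. is_toric_ideal n (J i) \<and> J i \<noteq> ?T"
      "ideal_gen n (B ` {..<t}) \<subseteq> ideal_sum t J" "ideal_sum t J \<subseteq> ?T"
    using binomial_family_in_proper_toric_family[OF dim B(1)] by blast
  have "?T \<subseteq> radical n (ideal_sum t J)" using B(2) radical_mono[OF J(2)] by simp
  moreover have "radical n (ideal_sum t J) \<subseteq> radical n ?T" by (rule radical_mono[OF J(3)])
  then have "radical n (ideal_sum t J) \<subseteq> ?T" using B(2) by (simp add: radical_radical)
  ultimately have "?T = radical n (ideal_sum t J)" by blast
  with J(1) show "\<exists>j\<le>t. \<exists>J. (\<forall>i<j. is_toric_ideal n (J i) \<and> J i \<noteq> ?T) \<and> ?T = radical n (ideal_sum j J)"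
    by (intro exI[of _ t] conjI exI[of _ J]) simp_all
qed

theorem theorem4p1:
  fixes n m :: nat and a :: "nat \<Rightarrow> nat \<Rightarrow> int"
  assumes "pointed_config n m a"
    and "dimQ (kerQ n m a) = 2"
  shows "Split n (toric_ideal n m a :: 'a::field mpoly set) = mu n (toric_ideal n m a :: 'a mpoly set)
     \<and> Split_rad n (toric_ideal n m a :: 'a mpoly set) = bar n (toric_ideal n m a :: 'a mpoly set)"
  using Split_eq_mu[OF assms] Split_rad_eq_bar[OF assms(2)] by blast

end
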